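(* Fix arms $i,j$ and any bandit algorithm. Let $H_t:=\mathbb E[\mu_i\mid\mathcal F_t]\cdot\Pr[A^*=j\mid\mathcal F_t]$. Then the sequence $(H_1,\dots,H_T)$ is a supermartingale (with respect to $(\mathcal F_t)$) if $i\neq j$, and a submartingale if $i=j$.
   Context: Bayesian bandit with Bernoulli rewards and independent priors: $K$ arms; $\mu_1,\dots,\mu_K\in[0,1]$ drawn independently, $\mu_i\sim\mathcal P_i$. Given the means, each arm $i$ has an i.i.d. sequence of $\{0,1\}$-valued samples with mean $\mu_i$; the $n$-th time arm $i$ is chosen its $n$-th sample is observed. The algorithm chooses one arm per round (possibly randomized) based on past arms and rewards, for $T$ rounds. $\mathcal F_t$ is the $\sigma$-algebra generated by chosen arms and rewards before round $t$. $A^*=\min(\arg\max_k\mu_k)$. *)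

theory Defs
  imports "HOL-Probability.Probability"
begin

text \<open>History of the first t rounds (rounds 1..t) of a bandit algorithm.
  alg s h r : arm chosen in round s given past history h and internal random seed r.
  z a n     : the n-th (0-indexed) sample of arm a.
  The n-th time arm a is chosen, its n-th sample is observed.\<close>
fun bandit_hist :: "(nat \<Rightarrow> (nat \<times> bool) list \<Rightarrow> 'r \<Rightarrow> nat) \<Rightarrow> (nat \<Rightarrow> nat \<Rightarrow> bool)
    \<Rightarrow> 'r \<Rightarrow> nat \<Rightarrow> (nat \<times> bool) list" where
  "bandit_hist alg z r 0 = []"
| "bandit_hist alg z r (Suc t) =
     (let h = bandit_hist alg z r t;
          a = alg (Suc t) h r;
          n = length (filter (\<lambda>p. fst p = a) h)
      in h @ [(a, z a n)])"

text \<open>F_t: sigma-algebra generated by the chosen arms and rewards before round t (t \<ge> 1).\<close>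
definition bandit_filtration ::
  "'a measure \<Rightarrow> (nat \<Rightarrow> (nat \<times> bool) list \<Rightarrow> 'r \<Rightarrow> nat) \<Rightarrow> (nat \<Rightarrow> nat \<Rightarrow> 'a \<Rightarrow> bool)
     \<Rightarrow> ('a \<Rightarrow> 'r) \<Rightarrow> nat \<Rightarrow> 'a measure" where
  "bandit_filtration M alg Z R t =
     vimage_algebra (space M) (\<lambda>\<omega>. bandit_hist alg (\<lambda>a n. Z a n \<omega>) (R \<omega>) (t - 1)) (count_space UNIV)"

definition best_arm :: "(nat \<Rightarrow> real) \<Rightarrow> nat \<Rightarrow> nat" where
  "best_arm mu K = (LEAST k. k < K \<and> (\<forall>l<K. mu l \<le> mu k))"

definition is_filtration :: "'a measure \<Rightarrow> (nat \<Rightarrow> 'a measure) \<Rightarrow> nat \<Rightarrow> bool" where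
  "is_filtration M F T \<longleftrightarrow>
     (\<forall>t\<in>{1..T}. subalgebra M (F t)) \<and> (\<forall>t\<in>{1..<T}. sets (F t) \<subseteq> sets (F (Suc t)))"

definition supermartingale :: "'a measure \<Rightarrow> (nat \<Rightarrow> 'a measure) \<Rightarrow> nat \<Rightarrow> (nat \<Rightarrow> 'a \<Rightarrow> real) \<Rightarrow> bool" where
  "supermartingale M F T X \<longleftrightarrow> is_filtration M F T \<and>
     (\<forall>t\<in>{1..T}. integrable M (X t) \<and> X t \<in> borel_measurable (F t)) \<and>
     (\<forall>t\<in>{1..<T}. AE \<omega> in M. real_cond_exp M (F t) (X (Suc t)) \<omega> \<le> X t \<omega>)"

definition submartingale :: "'a measure \<Rightarrow> (nat \<Rightarrow> 'a measure) \<Rightarrow> nat \<Rightarrow> (nat \<Rightarrow> 'a \<Rightarrow> real) \<Rightarrow> bool" where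
  "submartingale M F T X \<longleftrightarrow> is_filtration M F T \<and>
     (\<forall>t\<in>{1..T}. integrable M (X t) \<and> X t \<in> borel_measurable (F t)) \<and>
     (\<forall>t\<in>{1..<T}. AE \<omega> in M. real_cond_exp M (F t) (X (Suc t)) \<omega> \<ge> X t \<omega>)"

end

theory Submission
  imports Defs
begin

text \<open>
  On the event that the history of the first \<open>n\<close> rounds is \<open>h\<close>, the conditional expectation of a
  function \<open>f\<close> of the means is the posterior average \<open>E[f(\<mu>) L\<^sub>h(\<mu>)] / E[L\<^sub>h(\<mu>)]\<close>, where
  \<open>L\<^sub>h\<close> is the Bernoulli likelihood of the rewards in \<open>h\<close>: the arms chosen depend on the
  environment only through these rewards, and the seed of the algorithm is independent of the
  environment, so it contributes a common factor that cancels.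

  One more round pulls some arm \<open>a\<close> and observes \<open>b \<in> {0, 1}\<close>. If \<open>u\<^sub>b, v\<^sub>b, w\<^sub>b\<close> are the
  likelihood-weighted integrals of \<open>\<mu>\<^sub>i\<close>, of \<open>[A\<^sup>* = j]\<close> and of \<open>1\<close> after outcome \<open>b\<close>, the
  expected change of \<open>H\<close> is a nonnegative combination, over \<open>a\<close>, of
  \<open>u\<^sub>0 v\<^sub>0 / w\<^sub>0 + u\<^sub>1 v\<^sub>1 / w\<^sub>1 - (u\<^sub>0 + u\<^sub>1) (v\<^sub>0 + v\<^sub>1) / (w\<^sub>0 + w\<^sub>1)
    = (u\<^sub>1 w\<^sub>0 - u\<^sub>0 w\<^sub>1) (v\<^sub>1 w\<^sub>0 - v\<^sub>0 w\<^sub>1) / (w\<^sub>0 w\<^sub>1 (w\<^sub>0 + w\<^sub>1))\<close>.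
  For \<open>a \<noteq> i\<close> the first factor vanishes because the priors are independent. For \<open>a = i\<close> it
  is a posterior variance, hence nonnegative, and the second factor is the posterior covariance
  of \<open>\<mu>\<^sub>i\<close> and \<open>[A\<^sup>* = j]\<close>. With the other means fixed, \<open>[A\<^sup>* = j]\<close> is decreasing in
  \<open>\<mu>\<^sub>i\<close> for \<open>i \<noteq> j\<close> and increasing for \<open>i = j\<close>, so by independence of the priors and a
  Chebyshev-type association inequality this covariance is \<open>\<le> 0\<close>, respectively \<open>\<ge> 0\<close>.
\<close>

section \<open>Histories\<close>

lemma length_bandit_hist [simp]: "length (bandit_hist alg z r t) = t"
  by (induction t) (auto simp: Let_def)

lemma butlast_bandit_hist_Suc [simp]: "butlast (bandit_hist alg z r (Suc t)) = bandit_hist alg z r t"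
  by (simp add: Let_def)

definition sample_index :: "nat \<Rightarrow> (nat \<times> bool) list \<Rightarrow> nat" where
  "sample_index s h = length (filter (\<lambda>p. fst p = fst (h ! s)) (take s h))"

definition consistent_hist :: "(nat \<Rightarrow> (nat \<times> bool) list \<Rightarrow> 'r \<Rightarrow> nat) \<Rightarrow> (nat \<Rightarrow> nat \<Rightarrow> bool)
    \<Rightarrow> 'r \<Rightarrow> (nat \<times> bool) list \<Rightarrow> bool" where
  "consistent_hist alg z r h \<longleftrightarrow>
     (\<forall>s<length h. fst (h ! s) = alg (Suc s) (take s h) r \<and> snd (h ! s) = z (fst (h ! s)) (sample_index s h))"

lemma consistent_hist_snoc:
  "consistent_hist alg z r (h @ [x]) \<longleftrightarrow> consistent_hist alg z r h \<and>
     fst x = alg (Suc (length h)) h r \<and> snd x = z (fst x) (length (filter (\<lambda>p. fst p = fst x) h))"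
  unfolding consistent_hist_def sample_index_def by (auto simp: nth_append less_Suc_eq)

lemma bandit_hist_eq_iff: "bandit_hist alg z r t = h \<longleftrightarrow> length h = t \<and> consistent_hist alg z r h"
proof (induction t arbitrary: h)
  case 0
  then show ?case by (auto simp: consistent_hist_def)
next
  case (Suc t)
  show ?case
  proof
    assume "bandit_hist alg z r (Suc t) = h"
    then show "length h = Suc t \<and> consistent_hist alg z r h"
      using Suc.IH[of "bandit_hist alg z r t"] by (auto simp: Let_def consistent_hist_snoc)
  next
    assume h: "length h = Suc t \<and> consistent_hist alg z r h"
    then obtain h0 x where "h = h0 @ [x]"
      by (metis append_butlast_last_id list.size(3) nat.distinct(1))
    with h Suc.IH[of h0] show "bandit_hist alg z r (Suc t) = h"
      by (cases x) (auto simp: Let_def consistent_hist_snoc)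
  qed
qed

lemma sample_index_less:
  assumes "s < s'" "s' < length h" "fst (h ! s) = fst (h ! s')"
  shows "sample_index s h < sample_index s' h"
proof -
  let ?P = "\<lambda>p. fst p = fst (h ! s')"
  have "take s' h = take (Suc s) h @ take (s' - Suc s) (drop (Suc s) h)"
    using assms(1) by (metis Suc_leI le_add_diff_inverse take_add)
  moreover have "take (Suc s) h = take s h @ [h ! s]"
    using assms by (simp add: take_Suc_conv_app_nth)
  ultimately show ?thesis
    using assms(3) by (simp add: sample_index_def)
qed

lemma inj_on_sample_position: "inj_on (\<lambda>s. (fst (h ! s), sample_index s h)) {..<length h}"
proof (rule inj_onI)
  fix s s' assume "s \<in> {..<length h}" "s' \<in> {..<length h}"
    and "(fst (h ! s), sample_index s h) = (fst (h ! s'), sample_index s' h)"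
  then show "s = s'"
    using sample_index_less[of s s' h] sample_index_less[of s' s h]
    by (cases s s' rule: linorder_cases) auto
qed

section \<open>Conditional expectation given a discrete random variable\<close>

context prob_space
begin

definition level_average :: "('a \<Rightarrow> real) \<Rightarrow> ('a \<Rightarrow> 'b) \<Rightarrow> 'b \<Rightarrow> real" where
  "level_average X Y y = (\<integral>x. X x * indicator {x\<in>space M. Y x = y} x \<partial>M) / prob {x\<in>space M. Y x = y}"

lemma level_average_mult_prob:
  assumes "integrable M X" "{x\<in>space M. Y x = y} \<in> events"
  shows "level_average X Y y * prob {x\<in>space M. Y x = y} = (\<integral>x. X x * indicator {x\<in>space M. Y x = y} x \<partial>M)"
proof (cases "prob {x\<in>space M. Y x = y} = 0")
  case True
  then have "AE x in M. x \<notin> {x\<in>space M. Y x = y}"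
    using assms(2) by (intro AE_not_in) (simp add: emeasure_eq_measure null_sets_def)
  then have "(\<integral>x. X x * indicator {x\<in>space M. Y x = y} x \<partial>M) = 0"
    by (intro integral_eq_zero_AE) (auto elim: AE_mp)
  then show ?thesis using True by simp
qed (simp add: level_average_def)

lemma integral_level_average:
  fixes Y :: "'a \<Rightarrow> 'b::countable" and X :: "'a \<Rightarrow> real"
  assumes Y [measurable]: "Y \<in> measurable M (count_space UNIV)"
    and fin: "finite S" and YS: "\<And>\<omega>. \<omega> \<in> space M \<Longrightarrow> Y \<omega> \<in> S"
    and X: "integrable M X" and A: "A \<in> sets (vimage_algebra (space M) Y (count_space UNIV))"
  shows "(\<integral>x. indicator A x * level_average X Y (Y x) \<partial>M) = (\<integral>x. indicator A x * X x \<partial>M)"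
proof -
  obtain B where B: "A = Y -` B \<inter> space M"
    using A by (auto simp: sets_vimage_algebra2)
  let ?E = "\<lambda>y. {x\<in>space M. Y x = y}"
  have E_events [measurable]: "?E y \<in> events" for y
    by measurable
  have split_avg: "indicator A x * level_average X Y (Y x) = (\<Sum>y\<in>S\<inter>B. level_average X Y y * indicator (?E y) x)"
    if "x \<in> space M" for x
    using that YS fin B by (auto simp: indicator_def sum.delta split: if_splits)
  have split_X: "indicator A x * X x = (\<Sum>y\<in>S\<inter>B. X x * indicator (?E y) x)" if "x \<in> space M" for x
    using that YS fin B by (auto simp: indicator_def sum.delta split: if_splits)
  have "(\<integral>x. indicator A x * level_average X Y (Y x) \<partial>M) =
      (\<integral>x. (\<Sum>y\<in>S\<inter>B. level_average X Y y * indicator (?E y) x) \<partial>M)"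
    by (rule Bochner_Integration.integral_cong[OF refl split_avg])
  also have "\<dots> = (\<Sum>y\<in>S\<inter>B. level_average X Y y * prob (?E y))"
    by (subst Bochner_Integration.integral_sum) (auto simp: emeasure_eq_measure)
  also have "\<dots> = (\<Sum>y\<in>S\<inter>B. (\<integral>x. X x * indicator (?E y) x \<partial>M))"
    using X by (simp add: level_average_mult_prob)
  also have "\<dots> = (\<integral>x. (\<Sum>y\<in>S\<inter>B. X x * indicator (?E y) x) \<partial>M)"
    using integrable_mult_indicator[OF E_events X]
    by (subst Bochner_Integration.integral_sum) (auto simp: mult.commute)
  also have "\<dots> = (\<integral>x. indicator A x * X x \<partial>M)"
    by (rule Bochner_Integration.integral_cong[OF refl split_X[symmetric]])
  finally show ?thesis .
qed

lemma real_cond_exp_discrete: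
  fixes Y :: "'a \<Rightarrow> 'b::countable" and X :: "'a \<Rightarrow> real"
  assumes Y [measurable]: "Y \<in> measurable M (count_space UNIV)"
    and fin: "finite S" and YS: "\<And>\<omega>. \<omega> \<in> space M \<Longrightarrow> Y \<omega> \<in> S"
    and X: "integrable M X"
  shows "AE \<omega> in M. real_cond_exp M (vimage_algebra (space M) Y (count_space UNIV)) X \<omega> = level_average X Y (Y \<omega>)"
proof -
  let ?F = "vimage_algebra (space M) Y (count_space UNIV)"
  have "subalgebra M ?F"
    unfolding subalgebra_def using sets_image_in_sets[OF refl Y] by auto
  then interpret finite_measure_subalgebra M ?F
    by unfold_locales
  have [measurable]: "X \<in> borel_measurable M"
    using X by auto
  have "integrable M (\<lambda>\<omega>. \<Sum>y\<in>S. level_average X Y y * indicator {x\<in>space M. Y x = y} \<omega>)"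
    by (intro Bochner_Integration.integrable_sum integrable_mult_right integrable_real_indicator)
      (auto simp: emeasure_eq_measure)
  moreover have "level_average X Y (Y \<omega>) = (\<Sum>y\<in>S. level_average X Y y * indicator {x\<in>space M. Y x = y} \<omega>)"
    if "\<omega> \<in> space M" for \<omega>
    using that YS fin by (auto simp: indicator_def sum.delta)
  ultimately have "integrable M (\<lambda>\<omega>. level_average X Y (Y \<omega>))"
    using Bochner_Integration.integrable_cong[OF refl, of M "\<lambda>\<omega>. level_average X Y (Y \<omega>)"] by simp
  moreover have "(\<lambda>\<omega>. level_average X Y (Y \<omega>)) \<in> borel_measurable ?F"
    by (rule measurable_compose[OF measurable_vimage_algebra1]) auto
  ultimately show ?thesis
    using integral_level_average[OF Y fin YS X] X
    by (intro real_cond_exp_charact) (simp_all add: set_lebesgue_integral_def)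
qed

end

section \<open>The best arm\<close>

lemma best_arm_cong: "(\<And>k. k < K \<Longrightarrow> m k = m' k) \<Longrightarrow> best_arm m K = best_arm m' K"
  unfolding best_arm_def by (rule arg_cong[where f=Least]) auto

lemma best_arm_iff:
  assumes "K \<ge> 1"
  shows "best_arm m K = j \<longleftrightarrow> j < K \<and> (\<forall>l<K. m l \<le> m j \<and> (l < j \<longrightarrow> m l < m j))"
proof -
  let ?P = "\<lambda>k. k < K \<and> (\<forall>l<K. m l \<le> m k)"
  have "Max (m ` {..<K}) \<in> m ` {..<K}"
    using assms by (intro Max_in) (auto simp: lessThan_empty_iff)
  then obtain k0 where k0: "k0 < K" "m k0 = Max (m ` {..<K})"
    by auto
  then have "?P k0" by simp
  then have P: "?P (best_arm m K)"
    unfolding best_arm_def by (rule LeastI)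
  have strict: "m l < m (best_arm m K)" if l: "l < best_arm m K" for l
  proof -
    have "\<not> ?P l"
      using not_less_Least l unfolding best_arm_def by blast
    then obtain l' where "l' < K" "m l < m l'"
      using l P by (auto simp: not_le)
    with P show ?thesis by force
  qed
  show ?thesis
  proof
    assume "best_arm m K = j"
    then show "j < K \<and> (\<forall>l<K. m l \<le> m j \<and> (l < j \<longrightarrow> m l < m j))"
      using P strict by blast
  next
    assume j: "j < K \<and> (\<forall>l<K. m l \<le> m j \<and> (l < j \<longrightarrow> m l < m j))"
    show "best_arm m K = j"
      unfolding best_arm_def
    proof (rule Least_equality)
      show "?P j" using j by blast
      show "j \<le> y" if y: "?P y" for y
      proof (rule ccontr)
        assume "\<not> j \<le> y"
        then have "m y < m j" using j y by auto
        with j y show False by force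
      qed
    qed
  qed
qed

lemma best_arm_fun_upd_decrease:
  assumes K: "K \<ge> 1" and "i \<noteq> j" "x \<le> y" "best_arm (m(i := y)) K = j"
  shows "best_arm (m(i := x)) K = j"
proof -
  have "j < K" and upd: "\<And>l. l < K \<Longrightarrow> (m(i := y)) l \<le> m j \<and> (l < j \<longrightarrow> (m(i := y)) l < m j)"
    using assms unfolding best_arm_iff[OF K] by auto
  have "(m(i := x)) l \<le> m j \<and> (l < j \<longrightarrow> (m(i := x)) l < m j)" if "l < K" for l
    using upd[OF that] \<open>x \<le> y\<close> by (cases "l = i") auto
  then show ?thesis
    using \<open>j < K\<close> \<open>i \<noteq> j\<close> unfolding best_arm_iff[OF K] by simp
qed

lemma best_arm_fun_upd_increase:
  assumes K: "K \<ge> 1" and "x \<le> y" "best_arm (m(i := x)) K = i"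
  shows "best_arm (m(i := y)) K = i"
proof -
  have "i < K" and upd: "\<And>l. l < K \<Longrightarrow> (m(i := x)) l \<le> x \<and> (l < i \<longrightarrow> (m(i := x)) l < x)"
    using assms unfolding best_arm_iff[OF K] by auto
  have "(m(i := y)) l \<le> y \<and> (l < i \<longrightarrow> (m(i := y)) l < y)" if "l < K" for l
    using upd[OF that] \<open>x \<le> y\<close> by (cases "l = i") auto
  then show ?thesis
    using \<open>i < K\<close> unfolding best_arm_iff[OF K] by simp
qed

lemma measurable_best_arm_eq:
  assumes K: "K \<ge> 1" and g[measurable]: "\<And>k. k < K \<Longrightarrow> (\<lambda>x. g x k) \<in> borel_measurable MM"
  shows "{x\<in>space MM. best_arm (g x) K = j} \<in> sets MM"
proof (cases "j < K")
  case True
  have "{x\<in>space MM. best_arm (g x) K = j} =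
     {x\<in>space MM. \<forall>l\<in>{..<K}. g x l \<le> g x j \<and> (l < j \<longrightarrow> g x l < g x j)}"
    using True by (auto simp: best_arm_iff[OF K])
  also have "\<dots> \<in> sets MM"
    using True by measurable
  finally show ?thesis .
next
  case False
  then show ?thesis by (simp add: best_arm_iff[OF K])
qed

lemma mult_mem_unit_interval [intro]:
  fixes a b :: real
  shows "a \<in> {0..1} \<Longrightarrow> b \<in> {0..1} \<Longrightarrow> a * b \<in> {0..1}"
  by (auto intro: mult_le_one)

section \<open>Independence and product weights\<close>

context prob_space
begin

lemma integrable_bounded:
  fixes f :: "'a \<Rightarrow> real"
  assumes "f \<in> borel_measurable M" "\<And>\<omega>. \<omega> \<in> space M \<Longrightarrow> \<bar>f \<omega>\<bar> \<le> B"
  shows "integrable M f"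
  using assms by (intro integrable_const_bound[where B=B]) auto

lemma integrable_unit_interval:
  fixes f :: "'a \<Rightarrow> real"
  assumes "f \<in> borel_measurable M" "\<And>\<omega>. \<omega> \<in> space M \<Longrightarrow> f \<omega> \<in> {0..1}"
  shows "integrable M f"
  using assms by (intro integrable_bounded[where B=1]) auto

lemma indep_var_iff_indep_set_vimage:
  "indep_var MX X MY Y \<longleftrightarrow> random_variable MX X \<and> random_variable MY Y \<and>
     indep_set (sets (vimage_algebra (space M) X MX)) (sets (vimage_algebra (space M) Y MY))"
  by (simp add: indep_var_eq sets_vimage_algebra)

lemma indep_set_vimage_comp:
  assumes indep: "indep_set (sets (vimage_algebra (space M) X MX)) (sets (vimage_algebra (space M) Y MY))"
    and X: "X \<in> measurable M MX" and Y: "Y \<in> measurable M MY"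
    and f: "f \<in> measurable MX NX" and g: "g \<in> measurable MY NY"
  shows "indep_set (sets (vimage_algebra (space M) (\<lambda>\<omega>. f (X \<omega>)) NX)) (sets (vimage_algebra (space M) (\<lambda>\<omega>. g (Y \<omega>)) NY))"
proof -
  have "sets (vimage_algebra (space M) (\<lambda>\<omega>. f (X \<omega>)) NX) \<subseteq> sets (vimage_algebra (space M) X MX)"
    using measurable_space[OF X] by (intro sets_image_in_sets measurable_compose[OF measurable_vimage_algebra1 f]) auto
  moreover have "sets (vimage_algebra (space M) (\<lambda>\<omega>. g (Y \<omega>)) NY) \<subseteq> sets (vimage_algebra (space M) Y MY)"
    using measurable_space[OF Y] by (intro sets_image_in_sets measurable_compose[OF measurable_vimage_algebra1 g]) auto
  ultimately show ?thesis
    using indep unfolding indep_set_def by (rule_tac indep_sets_mono_sets) (auto split: bool.split)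
qed

lemma indep_set_vimage_integral_mult:
  fixes f :: "'b \<Rightarrow> real" and g :: "'c \<Rightarrow> real"
  assumes indep: "indep_set (sets (vimage_algebra (space M) X MX)) (sets (vimage_algebra (space M) Y MY))"
    and X: "X \<in> measurable M MX" and Y: "Y \<in> measurable M MY"
    and f: "f \<in> borel_measurable MX" and g: "g \<in> borel_measurable MY"
    and "integrable M (\<lambda>\<omega>. f (X \<omega>))" "integrable M (\<lambda>\<omega>. g (Y \<omega>))"
  shows "(\<integral>\<omega>. f (X \<omega>) * g (Y \<omega>) \<partial>M) = (\<integral>\<omega>. f (X \<omega>) \<partial>M) * (\<integral>\<omega>. g (Y \<omega>) \<partial>M)"
proof (rule indep_var_lebesgue_integral)
  show "indep_var borel (\<lambda>\<omega>. f (X \<omega>)) borel (\<lambda>\<omega>. g (Y \<omega>))"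
    unfolding indep_var_iff_indep_set_vimage
    using indep_set_vimage_comp[OF indep X Y f g] measurable_compose[OF X f] measurable_compose[OF Y g]
    by simp
qed fact+

end

text \<open>The likelihood of a history has this shape, with \<open>x\<close> the mean of one arm and \<open>Y\<close> the
  means of the other arms.\<close>

locale product_weight = prob_space +
  fixes N :: "'b measure" and x :: "'a \<Rightarrow> real" and Y :: "'a \<Rightarrow> 'b"
    and p :: "real \<Rightarrow> real" and q :: "'b \<Rightarrow> real"
  assumes indep: "indep_set (sets (vimage_algebra (space M) x borel)) (sets (vimage_algebra (space M) Y N))"
    and x_meas [measurable]: "x \<in> borel_measurable M" and Y_meas [measurable]: "Y \<in> measurable M N"
    and x_unit: "\<And>\<omega>. \<omega> \<in> space M \<Longrightarrow> x \<omega> \<in> {0..1}"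
    and p_meas [measurable]: "p \<in> borel_measurable borel"
    and p_unit: "\<And>y. y \<in> {0..1} \<Longrightarrow> p y \<in> {0..1}"
    and q_meas [measurable]: "q \<in> borel_measurable N"
    and q_unit: "\<And>\<omega>. \<omega> \<in> space M \<Longrightarrow> q (Y \<omega>) \<in> {0..1}"
begin

definition weight :: "'a \<Rightarrow> real" where
  "weight \<omega> = p (x \<omega>) * q (Y \<omega>)"

lemma weight_meas [measurable]: "weight \<in> borel_measurable M"
  unfolding weight_def[abs_def] by measurable

lemma weight_unit: "\<omega> \<in> space M \<Longrightarrow> weight \<omega> \<in> {0..1}"
  unfolding weight_def using p_unit[OF x_unit] q_unit by blast

lemma integral_weight_bounds: "0 \<le> (\<integral>\<omega>. x \<omega> * weight \<omega> \<partial>M)" "(\<integral>\<omega>. x \<omega> * weight \<omega> \<partial>M) \<le> (\<integral>\<omega>. weight \<omega> \<partial>M)"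
proof -
  show "0 \<le> (\<integral>\<omega>. x \<omega> * weight \<omega> \<partial>M)"
    using x_unit weight_unit by (intro integral_nonneg_AE AE_I2) auto
  show "(\<integral>\<omega>. x \<omega> * weight \<omega> \<partial>M) \<le> (\<integral>\<omega>. weight \<omega> \<partial>M)"
    using x_unit weight_unit
    by (intro integral_mono integrable_unit_interval) (auto intro: mult_left_le_one_le intro!: mult_le_one)
qed

lemma integrable_affine_weight:
  assumes [measurable]: "G \<in> borel_measurable M" and G_unit: "\<And>\<omega>. \<omega> \<in> space M \<Longrightarrow> G \<omega> \<in> {0..1}"
  shows "integrable M (\<lambda>\<omega>. (a * x \<omega> - b) * G \<omega> * weight \<omega>)"
proof -
  have "integrable M (\<lambda>\<omega>. a * (G \<omega> * x \<omega> * weight \<omega>) - b * (G \<omega> * weight \<omega>))"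
    using G_unit x_unit weight_unit
    by (intro Bochner_Integration.integrable_diff integrable_mult_right integrable_unit_interval)
      (auto intro!: mult_le_one)
  then show ?thesis
    by (simp add: algebra_simps)
qed

lemma integral_affine_weight:
  assumes [measurable]: "G \<in> borel_measurable M" and G_unit: "\<And>\<omega>. \<omega> \<in> space M \<Longrightarrow> G \<omega> \<in> {0..1}"
  shows "(\<integral>\<omega>. (a * x \<omega> - b) * G \<omega> * weight \<omega> \<partial>M) =
    a * (\<integral>\<omega>. G \<omega> * x \<omega> * weight \<omega> \<partial>M) - b * (\<integral>\<omega>. G \<omega> * weight \<omega> \<partial>M)"
proof -
  have "(\<integral>\<omega>. (a * x \<omega> - b) * G \<omega> * weight \<omega> \<partial>M) =
      (\<integral>\<omega>. a * (G \<omega> * x \<omega> * weight \<omega>) - b * (G \<omega> * weight \<omega>) \<partial>M)"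
    by (simp add: algebra_simps)
  also have "\<dots> = a * (\<integral>\<omega>. G \<omega> * x \<omega> * weight \<omega> \<partial>M) - b * (\<integral>\<omega>. G \<omega> * weight \<omega> \<partial>M)"
    using G_unit x_unit weight_unit
    by (subst Bochner_Integration.integral_diff) (auto intro!: integrable_unit_interval mult_le_one)
  finally show ?thesis .
qed

lemma integral_centered_weight:
  assumes F_meas [measurable]: "F \<in> borel_measurable N" and F_unit: "\<And>\<omega>. \<omega> \<in> space M \<Longrightarrow> F (Y \<omega>) \<in> {0..1}"
  shows "(\<integral>\<omega>. ((\<integral>\<omega>. weight \<omega> \<partial>M) * x \<omega> - (\<integral>\<omega>. x \<omega> * weight \<omega> \<partial>M)) * F (Y \<omega>) * weight \<omega> \<partial>M) = 0"
proof -
  define W where "W = (\<integral>\<omega>. weight \<omega> \<partial>M)"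
  define X1 where "X1 = (\<integral>\<omega>. x \<omega> * weight \<omega> \<partial>M)"
  define f where "f y = (W * y - X1) * p y" for y
  have f_meas: "f \<in> borel_measurable borel"
    unfolding f_def by measurable
  have "integrable M (\<lambda>\<omega>. W * (x \<omega> * p (x \<omega>)) - X1 * p (x \<omega>))"
    using x_unit p_unit
    by (intro Bochner_Integration.integrable_diff integrable_mult_right integrable_unit_interval)
      (auto intro!: mult_le_one)
  then have f_int: "integrable M (\<lambda>\<omega>. f (x \<omega>))"
    by (simp add: f_def left_diff_distrib mult.assoc)
  have q_int: "integrable M (\<lambda>\<omega>. q (Y \<omega>))"
    using q_unit by (intro integrable_unit_interval) auto
  have Fq_int: "integrable M (\<lambda>\<omega>. F (Y \<omega>) * q (Y \<omega>))"
    using q_unit F_unit by (intro integrable_unit_interval) (auto intro!: mult_le_one)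
  have "(\<integral>\<omega>. f (x \<omega>) * q (Y \<omega>) \<partial>M) = (\<integral>\<omega>. (W * x \<omega> - X1) * 1 * weight \<omega> \<partial>M)"
    by (simp add: f_def weight_def algebra_simps)
  also have "\<dots> = 0"
    by (subst integral_affine_weight) (simp_all add: W_def X1_def)
  finally have "(\<integral>\<omega>. f (x \<omega>) \<partial>M) * (\<integral>\<omega>. q (Y \<omega>) \<partial>M) = 0"
    by (simp add: indep_set_vimage_integral_mult[OF indep x_meas Y_meas f_meas q_meas f_int q_int])
  moreover have "(\<integral>\<omega>. F (Y \<omega>) * q (Y \<omega>) \<partial>M) = 0" if "(\<integral>\<omega>. q (Y \<omega>) \<partial>M) = 0"
  proof -
    have "0 \<le> (\<integral>\<omega>. F (Y \<omega>) * q (Y \<omega>) \<partial>M)"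
      using F_unit q_unit by (intro integral_nonneg_AE AE_I2) auto
    moreover have "(\<integral>\<omega>. F (Y \<omega>) * q (Y \<omega>) \<partial>M) \<le> (\<integral>\<omega>. q (Y \<omega>) \<partial>M)"
      using F_unit q_unit by (intro integral_mono Fq_int q_int) (auto intro: mult_left_le_one_le)
    ultimately show ?thesis using that by simp
  qed
  ultimately have "(\<integral>\<omega>. f (x \<omega>) \<partial>M) * (\<integral>\<omega>. F (Y \<omega>) * q (Y \<omega>) \<partial>M) = 0"
    by auto
  moreover have "(\<integral>\<omega>. (W * x \<omega> - X1) * F (Y \<omega>) * weight \<omega> \<partial>M) = (\<integral>\<omega>. f (x \<omega>) * (F (Y \<omega>) * q (Y \<omega>)) \<partial>M)"
    by (simp add: f_def weight_def algebra_simps)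
  ultimately show ?thesis
    using indep_set_vimage_integral_mult[OF indep x_meas Y_meas f_meas _ f_int Fq_int] by (simp add: W_def X1_def)
qed

text \<open>Freezing the first argument at the weighted mean \<open>c\<close> of \<open>x\<close> costs nothing by
  \<open>integral_centered_weight\<close>, and pointwise \<open>(x - c) (g x r - g c r)\<close> has a fixed sign.\<close>

lemma weighted_covariance_sign:
  fixes g :: "real \<Rightarrow> 'b \<Rightarrow> real" and \<sigma> :: real
  assumes g_meas [measurable]: "\<And>c. g c \<in> borel_measurable N" "(\<lambda>\<omega>. g (x \<omega>) (Y \<omega>)) \<in> borel_measurable M"
    and g_unit: "\<And>y \<omega>. y \<in> {0..1} \<Longrightarrow> \<omega> \<in> space M \<Longrightarrow> g y (Y \<omega>) \<in> {0..1}"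
    and g_mono: "\<And>y c \<omega>. y \<in> {0..1} \<Longrightarrow> c \<in> {0..1} \<Longrightarrow> \<omega> \<in> space M \<Longrightarrow>
      \<sigma> * ((y - c) * (g y (Y \<omega>) - g c (Y \<omega>))) \<le> 0"
  shows "\<sigma> * ((\<integral>\<omega>. g (x \<omega>) (Y \<omega>) * x \<omega> * weight \<omega> \<partial>M) * (\<integral>\<omega>. weight \<omega> \<partial>M)
             - (\<integral>\<omega>. g (x \<omega>) (Y \<omega>) * weight \<omega> \<partial>M) * (\<integral>\<omega>. x \<omega> * weight \<omega> \<partial>M)) \<le> 0"
proof -
  define W where "W = (\<integral>\<omega>. weight \<omega> \<partial>M)"
  define X1 where "X1 = (\<integral>\<omega>. x \<omega> * weight \<omega> \<partial>M)"
  have G_unit: "\<omega> \<in> space M \<Longrightarrow> g (x \<omega>) (Y \<omega>) \<in> {0..1}" for \<omega>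
    using g_unit x_unit by blast
  have X1_bounds: "0 \<le> X1" "X1 \<le> W"
    using integral_weight_bounds by (simp_all add: W_def X1_def)
  show ?thesis
  proof (cases "W = 0")
    case True
    then show ?thesis using X1_bounds by (simp add: W_def X1_def)
  next
    case False
    then have W_pos: "W > 0" using X1_bounds by simp
    define c where "c = X1 / W"
    have c_unit: "c \<in> {0..1}"
      using X1_bounds W_pos by (simp add: c_def)
    have pointwise: "\<sigma> * ((W * x \<omega> - X1) * g (x \<omega>) (Y \<omega>) * weight \<omega>) \<le> \<sigma> * ((W * x \<omega> - X1) * g c (Y \<omega>) * weight \<omega>)"
      if \<omega>: "\<omega> \<in> space M" for \<omega>
    proof -
      have "\<sigma> * ((W * x \<omega> - X1) * g (x \<omega>) (Y \<omega>) * weight \<omega>) - \<sigma> * ((W * x \<omega> - X1) * g c (Y \<omega>) * weight \<omega>)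
          = (W * weight \<omega>) * (\<sigma> * ((x \<omega> - c) * (g (x \<omega>) (Y \<omega>) - g c (Y \<omega>))))"
        using W_pos by (simp add: c_def field_simps)
      also have "\<dots> \<le> 0"
        using W_pos weight_unit[OF \<omega>] g_mono[OF x_unit[OF \<omega>] c_unit \<omega>]
        by (rule_tac mult_nonneg_nonpos) auto
      finally show ?thesis by simp
    qed
    have "\<sigma> * (W * (\<integral>\<omega>. g (x \<omega>) (Y \<omega>) * x \<omega> * weight \<omega> \<partial>M) - X1 * (\<integral>\<omega>. g (x \<omega>) (Y \<omega>) * weight \<omega> \<partial>M))
        = (\<integral>\<omega>. \<sigma> * ((W * x \<omega> - X1) * g (x \<omega>) (Y \<omega>) * weight \<omega>) \<partial>M)"
      using G_unit by (simp add: integral_affine_weight)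
    also have "\<dots> \<le> (\<integral>\<omega>. \<sigma> * ((W * x \<omega> - X1) * g c (Y \<omega>) * weight \<omega>) \<partial>M)"
      using G_unit g_unit[OF c_unit] pointwise
      by (intro integral_mono integrable_mult_right integrable_affine_weight) simp_all
    also have "\<dots> = 0"
      using integral_centered_weight[of "g c"] g_unit[OF c_unit] by (simp add: W_def X1_def)
    finally show ?thesis
      by (simp add: W_def X1_def algebra_simps)
  qed
qed

lemma weighted_variance_nonneg:
  "(\<integral>\<omega>. x \<omega> * weight \<omega> \<partial>M)\<^sup>2 \<le> (\<integral>\<omega>. x \<omega> * x \<omega> * weight \<omega> \<partial>M) * (\<integral>\<omega>. weight \<omega> \<partial>M)"
  using weighted_covariance_sign[of "\<lambda>y r. y" "-1"] by (simp add: power2_eq_square)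

end

section \<open>Posterior integrals\<close>

definition sample_match :: "(nat \<times> bool) list \<Rightarrow> (nat \<times> nat \<Rightarrow> bool) \<Rightarrow> real" where
  "sample_match h z = (\<Prod>s<length h. indicator {z. z (fst (h ! s), sample_index s h) = snd (h ! s)} z)"

definition bernoulli_lik :: "nat \<times> bool \<Rightarrow> (nat \<Rightarrow> real) \<Rightarrow> real" where
  "bernoulli_lik p m = (if snd p then m (fst p) else 1 - m (fst p))"

definition likelihood :: "(nat \<times> bool) list \<Rightarrow> (nat \<Rightarrow> real) \<Rightarrow> real" where
  "likelihood h m = (\<Prod>s<length h. bernoulli_lik (h ! s) m)"

lemma likelihood_snoc: "likelihood (h @ [p]) m = likelihood h m * bernoulli_lik p m"
  unfolding likelihood_def by (simp add: nth_append)

lemma measurable_bernoulli_lik [measurable]: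
  "fst p \<in> I \<Longrightarrow> bernoulli_lik p \<in> borel_measurable (PiM I (\<lambda>_. borel))"
  unfolding bernoulli_lik_def by (cases "snd p") simp_all

locale bandit = prob_space M for M :: "'a measure" +
  fixes N :: "'r measure" and K :: nat
    and mu :: "nat \<Rightarrow> 'a \<Rightarrow> real"
    and Z :: "nat \<Rightarrow> nat \<Rightarrow> 'a \<Rightarrow> bool"
    and R :: "'a \<Rightarrow> 'r"
    and alg :: "nat \<Rightarrow> (nat \<times> bool) list \<Rightarrow> 'r \<Rightarrow> nat"
  assumes mu_meas [measurable]: "\<And>k. k < K \<Longrightarrow> mu k \<in> borel_measurable M"
    and mu_unit: "\<And>k \<omega>. k < K \<Longrightarrow> \<omega> \<in> space M \<Longrightarrow> mu k \<omega> \<in> {0..1}"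
    and mu_indep: "indep_vars (\<lambda>_. borel) mu {..<K}"
    and Z_meas [measurable]: "\<And>k n. k < K \<Longrightarrow> Z k n \<in> measurable M (count_space UNIV)"
    and Z_bernoulli: "\<And>S (b :: nat \<times> nat \<Rightarrow> bool). finite S \<Longrightarrow> S \<subseteq> {..<K} \<times> UNIV \<Longrightarrow>
           AE \<omega> in M.
             real_cond_exp M
               (vimage_algebra (space M) (\<lambda>\<omega>. restrict (\<lambda>k. mu k \<omega>) {..<K}) (PiM {..<K} (\<lambda>_. borel)))
               (indicator {\<omega>\<in>space M. \<forall>p\<in>S. Z (fst p) (snd p) \<omega> = b p}) \<omega>
             = (\<Prod>p\<in>S. if b p then mu (fst p) \<omega> else 1 - mu (fst p) \<omega>)"
    and R_meas [measurable]: "R \<in> measurable M N"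
    and alg_meas [measurable]: "\<And>s h. alg s h \<in> measurable N (count_space UNIV)"
    and alg_range: "\<And>s h r. alg s h r < K"
    and R_indep: "indep_set (sets (vimage_algebra (space M) R N))
           (sets (vimage_algebra (space M)
              (\<lambda>\<omega>. (restrict (\<lambda>k. mu k \<omega>) {..<K}, restrict (\<lambda>p. Z (fst p) (snd p) \<omega>) ({..<K} \<times> UNIV)))
              (PiM {..<K} (\<lambda>_. borel) \<Otimes>\<^sub>M PiM ({..<K} \<times> UNIV) (\<lambda>_. count_space UNIV))))"
begin

definition means :: "'a \<Rightarrow> nat \<Rightarrow> real" where
  "means \<omega> = restrict (\<lambda>k. mu k \<omega>) {..<K}"

definition samples :: "'a \<Rightarrow> nat \<times> nat \<Rightarrow> bool" where
  "samples \<omega> = restrict (\<lambda>p. Z (fst p) (snd p) \<omega>) ({..<K} \<times> UNIV)"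

definition history :: "nat \<Rightarrow> 'a \<Rightarrow> (nat \<times> bool) list" where
  "history t \<omega> = bandit_hist alg (\<lambda>a n. Z a n \<omega>) (R \<omega>) t"

definition hist_event :: "(nat \<times> bool) list \<Rightarrow> 'a set" where
  "hist_event h = {\<omega>\<in>space M. history (length h) \<omega> = h}"

definition valid_hist :: "(nat \<times> bool) list \<Rightarrow> bool" where
  "valid_hist h \<longleftrightarrow> (\<forall>p\<in>set h. fst p < K)"

definition seed_set :: "(nat \<times> bool) list \<Rightarrow> 'r set" where
  "seed_set h = {r\<in>space N. \<forall>s<length h. alg (Suc s) (take s h) r = fst (h ! s)}"

definition seed_prob :: "(nat \<times> bool) list \<Rightarrow> real" where
  "seed_prob h = prob {\<omega>\<in>space M. R \<omega> \<in> seed_set h}"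

definition sample_event :: "(nat \<times> bool) list \<Rightarrow> 'a set" where
  "sample_event h = {\<omega>\<in>space M. \<forall>s<length h. Z (fst (h ! s)) (sample_index s h) \<omega> = snd (h ! s)}"

definition hist_integral :: "(nat \<times> bool) list \<Rightarrow> ((nat \<Rightarrow> real) \<Rightarrow> real) \<Rightarrow> real" where
  "hist_integral h f = (\<integral>\<omega>. f (means \<omega>) * indicator (hist_event h) \<omega> \<partial>M)"

definition lik_integral :: "(nat \<times> bool) list \<Rightarrow> ((nat \<Rightarrow> real) \<Rightarrow> real) \<Rightarrow> real" where
  "lik_integral h f = (\<integral>\<omega>. f (means \<omega>) * likelihood h (means \<omega>) \<partial>M)"

definition hist_algebra :: "nat \<Rightarrow> 'a measure" where
  "hist_algebra n = vimage_algebra (space M) (history n) (count_space UNIV)"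

lemma hist_event_eq: "hist_event h = {\<omega>\<in>space M. R \<omega> \<in> seed_set h} \<inter> sample_event h"
  unfolding hist_event_def sample_event_def seed_set_def history_def bandit_hist_eq_iff consistent_hist_def
  using measurable_space[OF R_meas] by (auto simp: eq_commute)

lemma length_history [simp]: "length (history t \<omega>) = t"
  by (simp add: history_def)

lemma valid_history: "valid_hist (history t \<omega>)"
  by (induction t) (simp_all add: history_def valid_hist_def Let_def alg_range)

lemma hist_event_invalid:
  assumes "\<not> valid_hist h"
  shows "hist_event h = {}"
proof -
  have "history (length h) \<omega> \<noteq> h" for \<omega>
    using valid_history[of "length h" \<omega>] assms by auto
  then show ?thesis by (auto simp: hist_event_def)
qed

lemma history_Suc:
  "history (Suc n) \<omega> = history n \<omega> @ [(alg (Suc n) (history n \<omega>) (R \<omega>),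
     Z (alg (Suc n) (history n \<omega>) (R \<omega>))
       (length (filter (\<lambda>p. fst p = alg (Suc n) (history n \<omega>) (R \<omega>)) (history n \<omega>))) \<omega>)]"
  by (simp add: history_def Let_def)

lemma means_meas [measurable]: "means \<in> measurable M (PiM {..<K} (\<lambda>_. borel))"
  unfolding means_def by measurable

lemma samples_meas [measurable]: "samples \<in> measurable M (PiM ({..<K} \<times> UNIV) (\<lambda>_. count_space UNIV))"
  unfolding samples_def by (rule measurable_restrict) auto

lemma means_unit: "\<omega> \<in> space M \<Longrightarrow> k < K \<Longrightarrow> means \<omega> k \<in> {0..1}"
  using mu_unit by (simp add: means_def)

lemma seed_set_sets: "seed_set h \<in> sets N"
proof -
  have "seed_set h = {r\<in>space N. \<forall>s\<in>{..<length h}. alg (Suc s) (take s h) r = fst (h ! s)}"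
    by (auto simp: seed_set_def)
  also have "\<dots> \<in> sets N"
    by measurable
  finally show ?thesis .
qed

lemma seed_event_sets [measurable]: "{\<omega>\<in>space M. R \<omega> \<in> seed_set h} \<in> events"
  using seed_set_sets by measurable

lemma sample_event_sets [measurable]:
  assumes "valid_hist h"
  shows "sample_event h \<in> events"
proof -
  have "{\<omega>\<in>space M. Z (fst (h ! s)) (sample_index s h) \<omega> = snd (h ! s)} \<in> events" if "s \<in> {..<length h}" for s
  proof -
    have [measurable]: "Z (fst (h ! s)) (sample_index s h) \<in> measurable M (count_space UNIV)"
      using assms nth_mem[of s h] that by (intro Z_meas) (simp add: valid_hist_def)
    show ?thesis by measurable
  qed
  then have "{\<omega>\<in>space M. \<forall>s\<in>{..<length h}. Z (fst (h ! s)) (sample_index s h) \<omega> = snd (h ! s)} \<in> events"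
    by (rule sets.sets_Collect_finite_All) auto
  then show ?thesis
    unfolding sample_event_def Ball_def lessThan_iff .
qed

lemma hist_event_sets [measurable]: "hist_event h \<in> events"
proof (cases "valid_hist h")
  case True
  then show ?thesis by (simp add: hist_event_eq)
qed (simp add: hist_event_invalid)

lemma history_meas [measurable]: "history t \<in> measurable M (count_space UNIV)"
proof -
  have "history t -` {h} \<inter> space M \<in> events" for h
  proof (cases "length h = t")
    case True
    then have "history t -` {h} \<inter> space M = hist_event h" by (auto simp: hist_event_def)
    then show ?thesis by simp
  next
    case False
    then have "history t -` {h} \<inter> space M = {}" by (auto simp: history_def)
    then show ?thesis by simp
  qed
  then show ?thesis by (simp add: measurable_count_space_eq2_countable)
qed

lemma likelihood_meas [measurable]: "valid_hist h \<Longrightarrow> likelihood h \<in> borel_measurable (PiM {..<K} (\<lambda>_. borel))"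
  unfolding likelihood_def valid_hist_def by (intro borel_measurable_prod) (auto dest: nth_mem)

lemma likelihood_unit:
  assumes "valid_hist h" "\<omega> \<in> space M"
  shows "likelihood h (means \<omega>) \<in> {0..1}"
proof -
  have "bernoulli_lik (h ! s) (means \<omega>) \<in> {0..1}" if "s < length h" for s
    using means_unit[OF assms(2), of "fst (h ! s)"] assms(1) that
    by (auto simp: bernoulli_lik_def valid_hist_def)
  then show ?thesis
    by (auto simp: likelihood_def intro!: prod_nonneg prod_le_1)
qed

lemma sample_match_meas:
  assumes h: "valid_hist h"
  shows "sample_match h \<in> borel_measurable (PiM ({..<K} \<times> UNIV) (\<lambda>_. count_space UNIV))"
  unfolding sample_match_def
proof (rule borel_measurable_prod)
  fix s assume "s \<in> {..<length h}"
  then have "(fst (h ! s), sample_index s h) \<in> {..<K} \<times> UNIV"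
    using h by (auto simp: valid_hist_def)
  then have [measurable]: "(\<lambda>z. z (fst (h ! s), sample_index s h))
      \<in> measurable (PiM ({..<K} \<times> UNIV) (\<lambda>_. count_space UNIV)) (count_space UNIV)"
    by (rule measurable_component_singleton)
  show "(\<lambda>z. indicator {z. z (fst (h ! s), sample_index s h) = snd (h ! s)} z :: real)
      \<in> borel_measurable (PiM ({..<K} \<times> UNIV) (\<lambda>_. count_space UNIV))"
    unfolding indicator_def by measurable
qed

lemma indicator_sample_event:
  assumes "valid_hist h" "\<omega> \<in> space M"
  shows "indicator (sample_event h) \<omega> = sample_match h (samples \<omega>)"
  using assms by (auto simp: sample_event_def sample_match_def samples_def indicator_def valid_hist_def)

lemma seed_indep:
  "indep_set (sets (vimage_algebra (space M) R N))
     (sets (vimage_algebra (space M) (\<lambda>\<omega>. (means \<omega>, samples \<omega>))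
        (PiM {..<K} (\<lambda>_. borel) \<Otimes>\<^sub>M PiM ({..<K} \<times> UNIV) (\<lambda>_. count_space UNIV))))"
  using R_indep unfolding means_def samples_def .

text \<open>The seed of the algorithm is independent of the environment, so it contributes to the
  history event only through the factor \<open>seed_prob h\<close>.\<close>

lemma integral_hist_event_seed:
  fixes f :: "(nat \<Rightarrow> real) \<Rightarrow> real"
  assumes h: "valid_hist h" and f [measurable]: "f \<in> borel_measurable (PiM {..<K} (\<lambda>_. borel))"
    and f_bound: "\<And>\<omega>. \<omega> \<in> space M \<Longrightarrow> \<bar>f (means \<omega>)\<bar> \<le> 1"
  shows "hist_integral h f = seed_prob h * (\<integral>\<omega>. f (means \<omega>) * indicator (sample_event h) \<omega> \<partial>M)"
proof -
  define \<psi> where "\<psi> mz = f (fst mz) * sample_match h (snd mz)"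
    for mz :: "(nat \<Rightarrow> real) \<times> (nat \<times> nat \<Rightarrow> bool)"
  have [measurable]: "sample_match h \<in> borel_measurable (PiM ({..<K} \<times> UNIV) (\<lambda>_. count_space UNIV))"
    using h by (rule sample_match_meas)
  have \<psi>_meas: "\<psi> \<in> borel_measurable (PiM {..<K} (\<lambda>_. borel) \<Otimes>\<^sub>M PiM ({..<K} \<times> UNIV) (\<lambda>_. count_space UNIV))"
    unfolding \<psi>_def by measurable
  have \<psi>_env: "\<psi> (means \<omega>, samples \<omega>) = f (means \<omega>) * indicator (sample_event h) \<omega>" if "\<omega> \<in> space M" for \<omega>
    using that h by (simp add: \<psi>_def indicator_sample_event)
  have seed_ind: "(\<lambda>r. indicator (seed_set h) r :: real) \<in> borel_measurable N"
    using seed_set_sets by measurable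
  have env_int: "integrable M (\<lambda>\<omega>. \<psi> (means \<omega>, samples \<omega>))"
  proof (rule integrable_bounded[where B=1])
    show "(\<lambda>\<omega>. \<psi> (means \<omega>, samples \<omega>)) \<in> borel_measurable M"
      using \<psi>_meas by measurable
    show "\<bar>\<psi> (means \<omega>, samples \<omega>)\<bar> \<le> 1" if "\<omega> \<in> space M" for \<omega>
      using f_bound[OF that] by (simp add: \<psi>_env[OF that] indicator_def)
  qed
  have seed_int: "integrable M (\<lambda>\<omega>. indicator (seed_set h) (R \<omega>) :: real)"
    using seed_ind by (intro integrable_bounded[where B=1]) (auto simp: indicator_def)
  have "hist_integral h f = (\<integral>\<omega>. indicator (seed_set h) (R \<omega>) * \<psi> (means \<omega>, samples \<omega>) \<partial>M)"
    unfolding hist_integral_def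
    by (intro Bochner_Integration.integral_cong) (auto simp: \<psi>_env hist_event_eq indicator_def)
  also have "\<dots> = (\<integral>\<omega>. indicator (seed_set h) (R \<omega>) \<partial>M) * (\<integral>\<omega>. \<psi> (means \<omega>, samples \<omega>) \<partial>M)"
    using seed_indep R_meas _ seed_ind \<psi>_meas seed_int env_int
    by (rule indep_set_vimage_integral_mult) simp
  also have "(\<integral>\<omega>. indicator (seed_set h) (R \<omega>) \<partial>M) = seed_prob h"
  proof -
    have "(\<integral>\<omega>. indicator (seed_set h) (R \<omega>) \<partial>M) = (\<integral>\<omega>. indicator {\<omega>\<in>space M. R \<omega> \<in> seed_set h} \<omega> \<partial>M :: real)"
      by (intro Bochner_Integration.integral_cong) (auto simp: indicator_def)
    then show ?thesis
      using seed_event_sets[of h] by (simp add: seed_prob_def)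
  qed
  also have "(\<integral>\<omega>. \<psi> (means \<omega>, samples \<omega>) \<partial>M) = (\<integral>\<omega>. f (means \<omega>) * indicator (sample_event h) \<omega> \<partial>M)"
    by (intro Bochner_Integration.integral_cong) (auto simp: \<psi>_env)
  finally show ?thesis .
qed

text \<open>Given the means, the observed samples are independent Bernoulli variables; they are
  distinct samples by \<open>inj_on_sample_position\<close>.\<close>

lemma cond_prob_sample_event:
  assumes h: "valid_hist h"
  shows "AE \<omega> in M. real_cond_exp M (vimage_algebra (space M) means (PiM {..<K} (\<lambda>_. borel)))
           (indicator (sample_event h)) \<omega> = likelihood h (means \<omega>)"
proof -
  define pos where "pos s = (fst (h ! s), sample_index s h)" for s
  define S where "S = pos ` {..<length h}"
  define b where "b q = snd (h ! (inv_into {..<length h} pos q))" for q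
  have inj: "inj_on pos {..<length h}"
    unfolding pos_def by (rule inj_on_sample_position)
  have b_pos: "b (pos s) = snd (h ! s)" if "s < length h" for s
    using inv_into_f_f[OF inj] that by (simp add: b_def)
  have pos_simps: "fst (pos s) = fst (h ! s)" "snd (pos s) = sample_index s h" for s
    by (simp_all add: pos_def)
  have S_K: "S \<subseteq> {..<K} \<times> UNIV"
    using h by (auto simp: S_def pos_def valid_hist_def)
  have "(\<forall>q\<in>S. Z (fst q) (snd q) \<omega> = b q) \<longleftrightarrow> (\<forall>s<length h. Z (fst (h ! s)) (sample_index s h) \<omega> = snd (h ! s))" for \<omega>
    unfolding S_def by (auto simp: pos_simps b_pos)
  then have event: "{\<omega>\<in>space M. \<forall>q\<in>S. Z (fst q) (snd q) \<omega> = b q} = sample_event h"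
    by (simp add: sample_event_def)
  have prod: "(\<Prod>q\<in>S. if b q then mu (fst q) \<omega> else 1 - mu (fst q) \<omega>) = likelihood h (means \<omega>)" for \<omega>
  proof -
    have "(\<Prod>q\<in>S. if b q then mu (fst q) \<omega> else 1 - mu (fst q) \<omega>)
        = (\<Prod>s<length h. if b (pos s) then mu (fst (pos s)) \<omega> else 1 - mu (fst (pos s)) \<omega>)"
      unfolding S_def by (rule prod.reindex[OF inj, unfolded comp_def])
    also have "\<dots> = likelihood h (means \<omega>)"
      unfolding likelihood_def using h
      by (intro prod.cong refl) (auto simp: b_pos bernoulli_lik_def pos_simps means_def valid_hist_def)
    finally show ?thesis .
  qed
  have "finite S"
    by (simp add: S_def)
  from Z_bernoulli[OF this S_K, of b]
  show ?thesis
    unfolding event prod means_def[abs_def, symmetric] .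
qed

lemma integral_sample_event:
  fixes f :: "(nat \<Rightarrow> real) \<Rightarrow> real"
  assumes h: "valid_hist h" and f [measurable]: "f \<in> borel_measurable (PiM {..<K} (\<lambda>_. borel))"
    and f_bound: "\<And>\<omega>. \<omega> \<in> space M \<Longrightarrow> \<bar>f (means \<omega>)\<bar> \<le> 1"
  shows "(\<integral>\<omega>. f (means \<omega>) * indicator (sample_event h) \<omega> \<partial>M) = lik_integral h f"
proof -
  let ?F = "vimage_algebra (space M) means (PiM {..<K} (\<lambda>_. borel))"
  have "subalgebra M ?F"
    unfolding subalgebra_def using sets_image_in_sets[OF refl means_meas] by auto
  then interpret finite_measure_subalgebra M ?F
    by unfold_locales
  have [measurable]: "sample_event h \<in> events"
    using h by (rule sample_event_sets)
  have f_F: "(\<lambda>\<omega>. f (means \<omega>)) \<in> borel_measurable ?F"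
    by (rule measurable_compose[OF measurable_vimage_algebra1 f]) (use measurable_space[OF means_meas] in auto)
  have int: "integrable M (\<lambda>\<omega>. f (means \<omega>) * indicator (sample_event h) \<omega>)"
    using f_bound by (intro integrable_bounded[where B=1]) (simp_all add: indicator_def)
  have "(\<integral>\<omega>. f (means \<omega>) * indicator (sample_event h) \<omega> \<partial>M) =
        (\<integral>\<omega>. f (means \<omega>) * real_cond_exp M ?F (indicator (sample_event h)) \<omega> \<partial>M)"
    using real_cond_exp_intg(2)[OF int f_F] h by simp
  also have "\<dots> = lik_integral h f"
    unfolding lik_integral_def using cond_prob_sample_event[OF h] h
    by (intro integral_cong_AE) (auto elim: AE_mp)
  finally show ?thesis .
qed

lemma hist_integral_eq:
  fixes f :: "(nat \<Rightarrow> real) \<Rightarrow> real"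
  assumes "valid_hist h" "f \<in> borel_measurable (PiM {..<K} (\<lambda>_. borel))"
    and "\<And>\<omega>. \<omega> \<in> space M \<Longrightarrow> \<bar>f (means \<omega>)\<bar> \<le> 1"
  shows "hist_integral h f = seed_prob h * lik_integral h f"
  using integral_hist_event_seed[OF assms] integral_sample_event[OF assms] by simp

lemma hist_integral_bounds:
  fixes f :: "(nat \<Rightarrow> real) \<Rightarrow> real"
  assumes f [measurable]: "f \<in> borel_measurable (PiM {..<K} (\<lambda>_. borel))"
    and f_unit: "\<And>\<omega>. \<omega> \<in> space M \<Longrightarrow> f (means \<omega>) \<in> {0..1}"
  shows "0 \<le> hist_integral h f" "hist_integral h f \<le> prob (hist_event h)"
proof -
  show "0 \<le> hist_integral h f"
    unfolding hist_integral_def using f_unit by (intro integral_nonneg_AE AE_I2) (auto simp: indicator_def)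
  have "hist_integral h f \<le> (\<integral>\<omega>. indicator (hist_event h) \<omega> \<partial>M)"
    unfolding hist_integral_def using f_unit
    by (intro integral_mono integrable_unit_interval) (auto simp: indicator_def)
  then show "hist_integral h f \<le> prob (hist_event h)"
    by simp
qed

lemma lik_integral_bounds:
  fixes f :: "(nat \<Rightarrow> real) \<Rightarrow> real"
  assumes h: "valid_hist h" and f [measurable]: "f \<in> borel_measurable (PiM {..<K} (\<lambda>_. borel))"
    and f_unit: "\<And>\<omega>. \<omega> \<in> space M \<Longrightarrow> f (means \<omega>) \<in> {0..1}"
  shows "0 \<le> lik_integral h f" "lik_integral h f \<le> lik_integral h (\<lambda>_. 1)"
proof -
  have L: "\<omega> \<in> space M \<Longrightarrow> likelihood h (means \<omega>) \<in> {0..1}" for \<omega>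
    using likelihood_unit[OF h] .
  show "0 \<le> lik_integral h f"
    unfolding lik_integral_def using f_unit L by (intro integral_nonneg_AE AE_I2) auto
  show "lik_integral h f \<le> lik_integral h (\<lambda>_. 1)"
    unfolding lik_integral_def using f_unit L h
    by (intro integral_mono integrable_unit_interval) (auto intro: mult_left_le_one_le intro!: mult_le_one)
qed

lemma lik_integral_snoc_True:
  "a < K \<Longrightarrow> lik_integral (h @ [(a, True)]) f = lik_integral h (\<lambda>m. f m * m a)"
  by (simp add: lik_integral_def likelihood_snoc bernoulli_lik_def means_def mult_ac)

lemma lik_integral_snoc_sum:
  fixes f :: "(nat \<Rightarrow> real) \<Rightarrow> real"
  assumes h: "valid_hist h" and a: "a < K" and f [measurable]: "f \<in> borel_measurable (PiM {..<K} (\<lambda>_. borel))"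
    and f_unit: "\<And>\<omega>. \<omega> \<in> space M \<Longrightarrow> f (means \<omega>) \<in> {0..1}"
  shows "lik_integral (h @ [(a, False)]) f + lik_integral (h @ [(a, True)]) f = lik_integral h f"
proof -
  have L: "\<omega> \<in> space M \<Longrightarrow> likelihood h (means \<omega>) \<in> {0..1}" for \<omega>
    using likelihood_unit[OF h] .
  have [measurable]: "likelihood h \<in> borel_measurable (PiM {..<K} (\<lambda>_. borel))"
    using h by (rule likelihood_meas)
  have [measurable]: "mu a \<in> borel_measurable M"
    using a by (rule mu_meas)
  have int: "integrable M (\<lambda>\<omega>. f (means \<omega>) * (likelihood h (means \<omega>) * g (mu a \<omega>)))"
    if [measurable]: "g \<in> borel_measurable borel" and g: "\<And>y. y \<in> {0..1} \<Longrightarrow> g y \<in> {0..1}" for g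
    using f_unit L g[OF mu_unit[OF a]] by (intro integrable_unit_interval) (auto intro!: mult_le_one)
  have "lik_integral (h @ [(a, False)]) f + lik_integral (h @ [(a, True)]) f =
      (\<integral>\<omega>. f (means \<omega>) * (likelihood h (means \<omega>) * (1 - mu a \<omega>)) +
            f (means \<omega>) * (likelihood h (means \<omega>) * mu a \<omega>) \<partial>M)"
    using a int[of "\<lambda>y. 1 - y"] int[of "\<lambda>y. y"]
    by (simp add: lik_integral_def likelihood_snoc bernoulli_lik_def means_def)
  also have "\<dots> = lik_integral h f"
    by (simp add: lik_integral_def algebra_simps)
  finally show ?thesis .
qed

lemma seed_set_snoc: "seed_set (h @ [(a, b)]) = {r \<in> seed_set h. alg (Suc (length h)) h r = a}"
  unfolding seed_set_def by (auto simp: nth_append less_Suc_eq)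

lemma seed_prob_snoc:
  "seed_prob (h @ [(a, b)]) = prob {\<omega>\<in>space M. R \<omega> \<in> seed_set h \<and> alg (Suc (length h)) h (R \<omega>) = a}"
  unfolding seed_prob_def seed_set_snoc by (rule arg_cong[where f=prob]) auto

lemma sum_seed_prob_snoc: "(\<Sum>a<K. seed_prob (h @ [(a, b)])) = seed_prob h"
proof -
  define A where "A a = {\<omega>\<in>space M. R \<omega> \<in> seed_set h \<and> alg (Suc (length h)) h (R \<omega>) = a}" for a
  have A_events: "A a \<in> events" for a
  proof -
    have "A a = {\<omega>\<in>space M. R \<omega> \<in> seed_set (h @ [(a, b)])}"
      unfolding A_def seed_set_snoc by auto
    then show ?thesis by simp
  qed
  have "(\<Sum>a<K. seed_prob (h @ [(a, b)])) = prob (\<Union>a<K. A a)"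
    unfolding seed_prob_snoc A_def[symmetric] using A_events
    by (intro finite_measure_finite_Union[symmetric]) (auto simp: disjoint_family_on_def A_def)
  also have "(\<Union>a<K. A a) = {\<omega>\<in>space M. R \<omega> \<in> seed_set h}"
    using alg_range by (auto simp: A_def)
  finally show ?thesis
    by (simp add: seed_prob_def)
qed

lemma hist_event_snoc_iff:
  assumes "\<omega> \<in> space M" "length h = n"
  shows "\<omega> \<in> hist_event (h @ [(a, b)]) \<longleftrightarrow> \<omega> \<in> hist_event h \<and> history (Suc n) \<omega> = h @ [(a, b)]"
proof -
  have "history n \<omega> = butlast (history (Suc n) \<omega>)"
    unfolding history_def by (rule butlast_bandit_hist_Suc[symmetric])
  then show ?thesis
    using assms by (auto simp: hist_event_def)
qed

lemma integral_history_Suc: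
  fixes \<phi> :: "(nat \<times> bool) list \<Rightarrow> real"
  assumes n: "length h = n"
  shows "(\<integral>\<omega>. \<phi> (history (Suc n) \<omega>) * indicator (hist_event h) \<omega> \<partial>M) =
         (\<Sum>a<K. \<Sum>b\<in>UNIV. \<phi> (h @ [(a, b)]) * prob (hist_event (h @ [(a, b)])))"
proof -
  have pointwise: "\<phi> (history (Suc n) \<omega>) * indicator (hist_event h) \<omega> =
      (\<Sum>a<K. \<Sum>b\<in>UNIV. \<phi> (h @ [(a, b)]) * indicator (hist_event (h @ [(a, b)])) \<omega>)"
    if \<omega>: "\<omega> \<in> space M" for \<omega>
  proof (cases "\<omega> \<in> hist_event h")
    case True
    obtain a0 b0 where next_step: "history (Suc n) \<omega> = h @ [(a0, b0)]" and "a0 < K"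
      using True n history_Suc[of n \<omega>] alg_range by (auto simp: hist_event_def)
    then have "(\<Sum>a<K. \<Sum>b\<in>UNIV. \<phi> (h @ [(a, b)]) * indicator (hist_event (h @ [(a, b)])) \<omega>) =
        (\<Sum>a<K. if a = a0 then \<phi> (h @ [(a0, b0)]) else 0)"
      using True \<omega> n by (intro sum.cong refl) (auto simp: hist_event_snoc_iff UNIV_bool indicator_def)
    also have "\<dots> = \<phi> (history (Suc n) \<omega>)"
      using \<open>a0 < K\<close> next_step by simp
    finally show ?thesis
      using True by simp
  qed (use \<omega> n in \<open>simp add: hist_event_snoc_iff\<close>)
  have step_int: "integrable M (\<lambda>\<omega>. c * indicator (hist_event g) \<omega> :: real)" for c g
    by (intro integrable_mult_right integrable_real_indicator) (simp_all add: emeasure_eq_measure)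
  have "(\<integral>\<omega>. \<phi> (history (Suc n) \<omega>) * indicator (hist_event h) \<omega> \<partial>M) =
        (\<integral>\<omega>. (\<Sum>a<K. \<Sum>b\<in>UNIV. \<phi> (h @ [(a, b)]) * indicator (hist_event (h @ [(a, b)])) \<omega>) \<partial>M)"
    by (intro Bochner_Integration.integral_cong) (simp_all add: pointwise)
  also have "\<dots> = (\<Sum>a<K. \<integral>\<omega>. (\<Sum>b\<in>UNIV. \<phi> (h @ [(a, b)]) * indicator (hist_event (h @ [(a, b)])) \<omega>) \<partial>M)"
    by (intro Bochner_Integration.integral_sum Bochner_Integration.integrable_sum step_int)
  also have "\<dots> = (\<Sum>a<K. \<Sum>b\<in>UNIV. \<integral>\<omega>. \<phi> (h @ [(a, b)]) * indicator (hist_event (h @ [(a, b)])) \<omega> \<partial>M)"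
    by (intro sum.cong refl Bochner_Integration.integral_sum step_int)
  also have "\<dots> = (\<Sum>a<K. \<Sum>b\<in>UNIV. \<phi> (h @ [(a, b)]) * prob (hist_event (h @ [(a, b)])))"
    by (simp add: emeasure_eq_measure)
  finally show ?thesis .
qed

lemma hist_algebra_subalgebra: "subalgebra M (hist_algebra n)"
  unfolding subalgebra_def hist_algebra_def using sets_image_in_sets[OF refl history_meas] by auto

lemma hist_algebra_mono: "sets (hist_algebra n) \<subseteq> sets (hist_algebra (Suc n))"
proof -
  have "history (Suc n) \<in> measurable (hist_algebra (Suc n)) (count_space UNIV)"
    unfolding hist_algebra_def by (rule measurable_vimage_algebra1) simp
  then have "(\<lambda>\<omega>. butlast (history (Suc n) \<omega>)) \<in> measurable (hist_algebra (Suc n)) (count_space UNIV)"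
    by simp
  moreover have "butlast (history (Suc n) \<omega>) = history n \<omega>" for \<omega>
    unfolding history_def by (rule butlast_bandit_hist_Suc)
  ultimately have "history n \<in> measurable (hist_algebra (Suc n)) (count_space UNIV)"
    by simp
  then show ?thesis
    unfolding hist_algebra_def[of n] by (rule sets_image_in_sets[rotated]) (simp add: hist_algebra_def)
qed

lemma real_cond_exp_history:
  assumes "integrable M X"
  shows "AE \<omega> in M. real_cond_exp M (hist_algebra n) X \<omega> =
    (\<integral>x. X x * indicator (hist_event (history n \<omega>)) x \<partial>M) / prob (hist_event (history n \<omega>))"
proof -
  have range: "history n \<omega> \<in> {h. set h \<subseteq> {..<K} \<times> UNIV \<and> length h = n}" for \<omega>
    using valid_history[of n \<omega>] by (auto simp: valid_hist_def history_def)
  have fin: "finite {h :: (nat \<times> bool) list. set h \<subseteq> {..<K} \<times> UNIV \<and> length h = n}"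
    by (rule finite_lists_length_eq) simp
  have "{x\<in>space M. history n x = history n \<omega>} = hist_event (history n \<omega>)" for \<omega>
    by (simp add: hist_event_def history_def)
  with real_cond_exp_discrete[OF history_meas fin range assms] show ?thesis
    unfolding hist_algebra_def level_average_def by simp
qed

end

section \<open>The drift of \<open>H\<close>\<close>

text \<open>With \<open>x / 0 = 0\<close> the identity also holds when \<open>w0\<close> or \<open>w1\<close> vanishes, since then the
  corresponding \<open>u\<close> and \<open>v\<close> vanish too.\<close>

lemma two_point_mixture_gap:
  fixes u0 u1 v0 v1 w0 w1 :: real
  assumes "0 \<le> u0" "u0 \<le> w0" "0 \<le> u1" "u1 \<le> w1" "0 \<le> v0" "v0 \<le> w0" "0 \<le> v1" "v1 \<le> w1"
  shows "u0 * v0 / w0 + u1 * v1 / w1 - (u0 + u1) * (v0 + v1) / (w0 + w1) =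
         (u1 * w0 - u0 * w1) * (v1 * w0 - v0 * w1) / (w0 * w1 * (w0 + w1))"
proof (cases "w0 = 0 \<or> w1 = 0")
  case True
  then show ?thesis using assms by auto
next
  case False
  then have "w0 > 0" "w1 > 0" using assms by auto
  then show ?thesis by (simp add: field_simps)
qed

locale bandit_arms = bandit +
  fixes i j :: nat
  assumes i_lt: "i < K" and j_lt: "j < K"
begin

lemma K_pos: "K \<ge> 1"
  using j_lt by simp

definition other_means :: "'a \<Rightarrow> nat \<Rightarrow> real" where
  "other_means \<omega> = restrict (\<lambda>k. mu k \<omega>) ({..<K} - {i})"

definition arm_lik :: "(nat \<times> bool) list \<Rightarrow> real \<Rightarrow> real" where
  "arm_lik h y = (\<Prod>s\<in>{s. s < length h \<and> fst (h ! s) = i}. if snd (h ! s) then y else 1 - y)"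

definition others_lik :: "(nat \<times> bool) list \<Rightarrow> (nat \<Rightarrow> real) \<Rightarrow> real" where
  "others_lik h r = (\<Prod>s\<in>{s. s < length h \<and> fst (h ! s) \<noteq> i}. bernoulli_lik (h ! s) r)"

definition best_indicator :: "(nat \<Rightarrow> real) \<Rightarrow> real" where
  "best_indicator m = (if best_arm m K = j then 1 else 0)"

text \<open>\<open>H\<close> drifts down (supermartingale) when \<open>i \<noteq> j\<close> and up (submartingale) when \<open>i = j\<close>.\<close>

definition drift_sign :: real where
  "drift_sign = (if i = j then -1 else 1)"

definition weighted_H :: "(nat \<times> bool) list \<Rightarrow> real" where
  "weighted_H h = lik_integral h (\<lambda>m. m i) * lik_integral h best_indicator / lik_integral h (\<lambda>_. 1)"

lemma other_means_meas [measurable]: "other_means \<in> measurable M (PiM ({..<K} - {i}) (\<lambda>_. borel))"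
  unfolding other_means_def by measurable

lemma mu_i_meas [measurable]: "mu i \<in> borel_measurable M"
  using i_lt by (rule mu_meas)

lemma arm_lik_meas [measurable]: "arm_lik h \<in> borel_measurable borel"
  unfolding arm_lik_def by measurable

lemma others_lik_meas [measurable]:
  "valid_hist h \<Longrightarrow> others_lik h \<in> borel_measurable (PiM ({..<K} - {i}) (\<lambda>_. borel))"
  unfolding others_lik_def valid_hist_def by (intro borel_measurable_prod) (auto dest: nth_mem)

lemma likelihood_split:
  assumes "valid_hist h"
  shows "likelihood h (means \<omega>) = arm_lik h (mu i \<omega>) * others_lik h (other_means \<omega>)"
proof -
  have "likelihood h (means \<omega>) =
      (\<Prod>s\<in>{s. s < length h \<and> fst (h ! s) = i}. bernoulli_lik (h ! s) (means \<omega>)) *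
      (\<Prod>s\<in>{s. s < length h \<and> fst (h ! s) \<noteq> i}. bernoulli_lik (h ! s) (means \<omega>))"
    unfolding likelihood_def by (subst prod.union_disjoint[symmetric]) (auto intro!: prod.cong)
  also have "\<dots> = arm_lik h (mu i \<omega>) * others_lik h (other_means \<omega>)"
    using assms i_lt unfolding arm_lik_def others_lik_def
    by (intro arg_cong2[where f="(*)"] prod.cong)
      (auto simp: bernoulli_lik_def means_def other_means_def valid_hist_def dest: nth_mem)
  finally show ?thesis .
qed

lemma arm_lik_unit: "y \<in> {0..1} \<Longrightarrow> arm_lik h y \<in> {0..1}"
  unfolding arm_lik_def by (auto intro!: prod_nonneg prod_le_1)

lemma others_lik_unit:
  assumes "valid_hist h" "\<omega> \<in> space M"
  shows "others_lik h (other_means \<omega>) \<in> {0..1}"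
proof -
  have "bernoulli_lik (h ! s) (other_means \<omega>) \<in> {0..1}" if "s < length h" "fst (h ! s) \<noteq> i" for s
    using mu_unit[OF _ assms(2), of "fst (h ! s)"] assms(1) that
    by (auto simp: bernoulli_lik_def other_means_def valid_hist_def dest: nth_mem)
  then show ?thesis
    by (auto simp: others_lik_def intro!: prod_nonneg prod_le_1)
qed

lemma indep_arm_others:
  "indep_set (sets (vimage_algebra (space M) (mu i) borel))
     (sets (vimage_algebra (space M) other_means (PiM ({..<K} - {i}) (\<lambda>_. borel))))"
proof -
  have restrict_i: "(\<lambda>\<omega>. restrict (\<lambda>k. mu k \<omega>) {i}) \<in> measurable M (PiM {i} (\<lambda>_. borel))"
    using i_lt by (intro measurable_restrict) auto
  have "indep_var (PiM {i} (\<lambda>_. borel)) (\<lambda>\<omega>. restrict (\<lambda>k. mu k \<omega>) {i})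
      (PiM ({..<K} - {i}) (\<lambda>_. borel)) other_means"
    unfolding other_means_def using i_lt by (intro indep_var_restrict[OF mu_indep]) auto
  then have "indep_set (sets (vimage_algebra (space M) (\<lambda>\<omega>. restrict (\<lambda>k. mu k \<omega>) {i}) (PiM {i} (\<lambda>_. borel))))
      (sets (vimage_algebra (space M) other_means (PiM ({..<K} - {i}) (\<lambda>_. borel))))"
    unfolding indep_var_iff_indep_set_vimage by simp
  then have "indep_set (sets (vimage_algebra (space M) (\<lambda>\<omega>. restrict (\<lambda>k. mu k \<omega>) {i} i) borel))
      (sets (vimage_algebra (space M) (\<lambda>\<omega>. other_means \<omega>) (PiM ({..<K} - {i}) (\<lambda>_. borel))))"
    by (rule indep_set_vimage_comp[OF _ restrict_i other_means_meas]) simp_all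
  then show ?thesis
    by simp
qed

lemma product_weight_likelihood:
  assumes h: "valid_hist h"
  shows "product_weight M (PiM ({..<K} - {i}) (\<lambda>_. borel)) (mu i) other_means (arm_lik h) (others_lik h)"
proof
  show "indep_set (sets (vimage_algebra (space M) (mu i) borel))
     (sets (vimage_algebra (space M) other_means (PiM ({..<K} - {i}) (\<lambda>_. borel))))"
    by (rule indep_arm_others)
  show "others_lik h \<in> borel_measurable (PiM ({..<K} - {i}) (\<lambda>_. borel))"
    using h by (rule others_lik_meas)
  show "others_lik h (other_means \<omega>) \<in> {0..1}" if "\<omega> \<in> space M" for \<omega>
    using h that by (rule others_lik_unit)
  show "mu i \<omega> \<in> {0..1}" if "\<omega> \<in> space M" for \<omega>
    using i_lt that by (rule mu_unit)
  show "arm_lik h y \<in> {0..1}" if "y \<in> {0..1}" for y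
    using that by (rule arm_lik_unit)
qed simp_all

lemma means_arm: "means \<omega> i = mu i \<omega>"
  using i_lt by (simp add: means_def)

lemma component_arm_meas [measurable]: "(\<lambda>m. m i) \<in> borel_measurable (PiM {..<K} (\<lambda>_. borel))"
  using i_lt by (intro measurable_component_singleton) simp

lemma measurable_best_indicator:
  assumes "\<And>k. k < K \<Longrightarrow> (\<lambda>x. g x k) \<in> borel_measurable MM"
  shows "(\<lambda>x. best_indicator (g x)) \<in> borel_measurable MM"
  unfolding best_indicator_def by (intro measurable_If measurable_best_arm_eq[OF K_pos assms]) simp_all

lemma best_indicator_meas [measurable]: "best_indicator \<in> borel_measurable (PiM {..<K} (\<lambda>_. borel))"
  using measurable_best_indicator[where g="\<lambda>m. m" and MM="PiM {..<K} (\<lambda>_. borel)"] by simp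

lemma best_indicator_upd_meas:
  "(\<lambda>r. best_indicator (r(i := c))) \<in> borel_measurable (PiM ({..<K} - {i}) (\<lambda>_. borel))"
proof (rule measurable_best_indicator)
  fix k assume "k < K"
  then show "(\<lambda>r. (r(i := c)) k) \<in> borel_measurable (PiM ({..<K} - {i}) (\<lambda>_. borel))"
    by (cases "k = i") (simp_all add: measurable_component_singleton)
qed

lemma best_indicator_unit: "best_indicator m \<in> {0..1}"
  by (simp add: best_indicator_def)

lemma best_indicator_other_means: "best_indicator ((other_means \<omega>)(i := mu i \<omega>)) = best_indicator (means \<omega>)"
  unfolding best_indicator_def using best_arm_cong[of K "(other_means \<omega>)(i := mu i \<omega>)" "means \<omega>"]
  by (simp add: other_means_def means_def)

lemma drift_sign_best_indicator:
  "drift_sign * ((y - c) * (best_indicator (m(i := y)) - best_indicator (m(i := c)))) \<le> 0"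
proof -
  have "drift_sign * ((y - c) * (best_indicator (m(i := y)) - best_indicator (m(i := c)))) \<le> 0"
    if "c \<le> y" for y c
  proof -
    have "i \<noteq> j \<Longrightarrow> best_indicator (m(i := y)) \<le> best_indicator (m(i := c))"
      using best_arm_fun_upd_decrease[OF K_pos _ that] by (auto simp: best_indicator_def)
    moreover have "i = j \<Longrightarrow> best_indicator (m(i := c)) \<le> best_indicator (m(i := y))"
      using best_arm_fun_upd_increase[OF K_pos that] by (auto simp: best_indicator_def)
    ultimately show ?thesis
      using that by (auto simp: drift_sign_def intro: mult_nonneg_nonpos mult_nonneg_nonneg)
  qed
  from this[of c y] this[of y c] show ?thesis
    by (cases "c \<le> y") (auto simp: algebra_simps)
qed

lemma arm_lik_snoc_other: "a \<noteq> i \<Longrightarrow> arm_lik (h @ [(a, b)]) = arm_lik h"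
  unfolding arm_lik_def fun_eq_iff
  by (auto intro!: prod.cong simp: nth_append less_Suc_eq)

lemma lik_integral_arm_factor:
  assumes h: "valid_hist h" and \<phi> [measurable]: "\<phi> \<in> borel_measurable borel"
    and \<phi>_unit: "\<And>y. y \<in> {0..1} \<Longrightarrow> \<phi> y \<in> {0..1}"
  shows "lik_integral h (\<lambda>m. \<phi> (m i)) =
    (\<integral>\<omega>. \<phi> (mu i \<omega>) * arm_lik h (mu i \<omega>) \<partial>M) * (\<integral>\<omega>. others_lik h (other_means \<omega>) \<partial>M)"
proof -
  have [measurable]: "others_lik h \<in> borel_measurable (PiM ({..<K} - {i}) (\<lambda>_. borel))"
    using h by (rule others_lik_meas)
  have "lik_integral h (\<lambda>m. \<phi> (m i)) =
      (\<integral>\<omega>. (\<lambda>y. \<phi> y * arm_lik h y) (mu i \<omega>) * others_lik h (other_means \<omega>) \<partial>M)"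
    by (simp add: lik_integral_def likelihood_split[OF h] means_arm mult.assoc)
  also have "\<dots> = (\<integral>\<omega>. \<phi> (mu i \<omega>) * arm_lik h (mu i \<omega>) \<partial>M) * (\<integral>\<omega>. others_lik h (other_means \<omega>) \<partial>M)"
    using mu_unit[OF i_lt] \<phi>_unit arm_lik_unit others_lik_unit[OF h]
    by (subst indep_set_vimage_integral_mult[OF indep_arm_others mu_i_meas other_means_meas])
      (auto intro!: integrable_unit_interval mult_le_one)
  finally show ?thesis .
qed

text \<open>Pulling an arm other than \<open>i\<close> leaves the posterior mean of \<open>\<mu>\<^sub>i\<close> unchanged, by the
  independence of the priors.\<close>

lemma lik_integral_snoc_other_cross:
  assumes h: "valid_hist h" and a: "a < K" "a \<noteq> i"
  shows "lik_integral (h @ [(a, True)]) (\<lambda>m. m i) * lik_integral (h @ [(a, False)]) (\<lambda>_. 1) =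
         lik_integral (h @ [(a, False)]) (\<lambda>m. m i) * lik_integral (h @ [(a, True)]) (\<lambda>_. 1)"
proof -
  have hb: "valid_hist (h @ [(a, b)])" for b
    using h a by (simp add: valid_hist_def)
  note factor = lik_integral_arm_factor[OF hb, unfolded arm_lik_snoc_other[OF a(2)]]
  show ?thesis
    using factor[of "\<lambda>y. y"] factor[of "\<lambda>y. 1"] by simp
qed

lemma product_weight_eq_likelihood:
  assumes h: "valid_hist h"
  shows "product_weight.weight (mu i) other_means (arm_lik h) (others_lik h) = (\<lambda>\<omega>. likelihood h (means \<omega>))"
  by (simp add: fun_eq_iff product_weight.weight_def[OF product_weight_likelihood[OF h]] likelihood_split[OF h])

lemma posterior_variance_nonneg:
  assumes h: "valid_hist h"
  shows "(lik_integral h (\<lambda>m. m i))\<^sup>2 \<le> lik_integral h (\<lambda>m. m i * m i) * lik_integral h (\<lambda>_. 1)"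
proof -
  interpret W: product_weight M "PiM ({..<K} - {i}) (\<lambda>_. borel)" "mu i" other_means "arm_lik h" "others_lik h"
    using h by (rule product_weight_likelihood)
  show ?thesis
    using W.weighted_variance_nonneg
    by (simp add: product_weight_eq_likelihood[OF h] lik_integral_def means_arm mult.assoc)
qed

text \<open>The indicator of \<open>A\<^sup>* = j\<close> is monotone in \<open>\<mu>\<^sub>i\<close> when the other means are fixed, hence
  its posterior covariance with \<open>\<mu>\<^sub>i\<close> has the sign \<open>-drift_sign\<close>.\<close>

lemma drift_sign_posterior_covariance:
  assumes h: "valid_hist h"
  shows "drift_sign * (lik_integral h (\<lambda>m. best_indicator m * m i) * lik_integral h (\<lambda>_. 1)
    - lik_integral h best_indicator * lik_integral h (\<lambda>m. m i)) \<le> 0"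
proof -
  interpret W: product_weight M "PiM ({..<K} - {i}) (\<lambda>_. borel)" "mu i" other_means "arm_lik h" "others_lik h"
    using h by (rule product_weight_likelihood)
  show ?thesis
    using W.weighted_covariance_sign[of "\<lambda>y r. best_indicator (r(i := y))" drift_sign]
      best_indicator_upd_meas best_indicator_unit drift_sign_best_indicator
    by (simp add: product_weight_eq_likelihood[OF h] lik_integral_def means_arm best_indicator_other_means
        mult.assoc mult.commute)
qed

lemma drift_sign_snoc_cross:
  assumes h: "valid_hist h" and a: "a < K"
  defines "u b \<equiv> lik_integral (h @ [(a, b)]) (\<lambda>m. m i)"
    and "v b \<equiv> lik_integral (h @ [(a, b)]) best_indicator"
    and "w b \<equiv> lik_integral (h @ [(a, b)]) (\<lambda>_. 1)"
  shows "drift_sign * ((u True * w False - u False * w True) * (v True * w False - v False * w True)) \<le> 0"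
proof (cases "a = i")
  case False
  then show ?thesis
    using lik_integral_snoc_other_cross[OF h a False] by (simp add: u_def w_def)
next
  case True
  define U where "U = lik_integral h (\<lambda>m. m i)"
  define V where "V = lik_integral h best_indicator"
  define W where "W = lik_integral h (\<lambda>_. 1)"
  have unit: "\<omega> \<in> space M \<Longrightarrow> means \<omega> i \<in> {0..1}" "\<omega> \<in> space M \<Longrightarrow> best_indicator (means \<omega>) \<in> {0..1}" for \<omega>
    using means_unit i_lt best_indicator_unit by auto
  have snoc_True: "u True = lik_integral h (\<lambda>m. m i * m i)" "w True = U"
      "v True = lik_integral h (\<lambda>m. best_indicator m * m i)"
    using True i_lt by (simp_all add: u_def v_def w_def U_def lik_integral_snoc_True)
  have snoc_False: "u False = U - u True" "v False = V - v True" "w False = W - w True"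
    using lik_integral_snoc_sum[OF h a] unit
    by (simp_all add: u_def v_def w_def U_def V_def W_def eq_diff_eq)
  have "u True * w False - u False * w True \<ge> 0"
    using posterior_variance_nonneg[OF h]
    by (simp add: snoc_False snoc_True U_def W_def power2_eq_square algebra_simps)
  moreover have "drift_sign * (v True * w False - v False * w True) \<le> 0"
    using drift_sign_posterior_covariance[OF h]
    by (simp add: snoc_False snoc_True U_def V_def W_def algebra_simps)
  ultimately have "(u True * w False - u False * w True) * (drift_sign * (v True * w False - v False * w True)) \<le> 0"
    by (rule mult_nonneg_nonpos)
  then show ?thesis
    by (simp add: algebra_simps)
qed

lemma weighted_H_step_arm:
  assumes h: "valid_hist h" and a: "a < K"
  shows "drift_sign * ((\<Sum>b\<in>UNIV. weighted_H (h @ [(a, b)])) - weighted_H h) \<le> 0"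
proof -
  define u where "u b = lik_integral (h @ [(a, b)]) (\<lambda>m. m i)" for b
  define v where "v b = lik_integral (h @ [(a, b)]) best_indicator" for b
  define w where "w b = lik_integral (h @ [(a, b)]) (\<lambda>_. 1)" for b
  have hb: "valid_hist (h @ [(a, b)])" for b
    using h a by (simp add: valid_hist_def)
  have unit: "\<omega> \<in> space M \<Longrightarrow> means \<omega> i \<in> {0..1}" "\<omega> \<in> space M \<Longrightarrow> best_indicator (means \<omega>) \<in> {0..1}" for \<omega>
    using means_unit i_lt best_indicator_unit by auto
  have bounds: "0 \<le> u b" "u b \<le> w b" "0 \<le> v b" "v b \<le> w b" for b
    using lik_integral_bounds[OF hb, of "\<lambda>m. m i" b] lik_integral_bounds[OF hb, of best_indicator b] unit
    by (simp_all add: u_def v_def w_def)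
  have sums: "u False + u True = lik_integral h (\<lambda>m. m i)" "v False + v True = lik_integral h best_indicator"
      "w False + w True = lik_integral h (\<lambda>_. 1)"
    using lik_integral_snoc_sum[OF h a] unit by (simp_all add: u_def v_def w_def)
  have "(\<Sum>b\<in>UNIV. weighted_H (h @ [(a, b)])) - weighted_H h =
      u False * v False / w False + u True * v True / w True
        - (u False + u True) * (v False + v True) / (w False + w True)"
    by (simp add: UNIV_bool weighted_H_def u_def v_def w_def sums[unfolded u_def v_def w_def])
  also have "\<dots> = (u True * w False - u False * w True) * (v True * w False - v False * w True) /
      (w False * w True * (w False + w True))"
    using bounds by (intro two_point_mixture_gap)
  finally have "drift_sign * ((\<Sum>b\<in>UNIV. weighted_H (h @ [(a, b)])) - weighted_H h) =
      drift_sign * ((u True * w False - u False * w True) * (v True * w False - v False * w True)) /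
      (w False * w True * (w False + w True))"
    by simp
  also have "\<dots> \<le> 0"
  proof (rule divide_nonpos_nonneg)
    show "drift_sign * ((u True * w False - u False * w True) * (v True * w False - v False * w True)) \<le> 0"
      using drift_sign_snoc_cross[OF h a] by (simp add: u_def v_def w_def)
    have "0 \<le> w b" for b
      using bounds(1,2) by (rule order_trans)
    then show "0 \<le> w False * w True * (w False + w True)"
      by (intro mult_nonneg_nonneg add_nonneg_nonneg)
  qed
  finally show ?thesis .
qed

definition H_hist :: "(nat \<times> bool) list \<Rightarrow> real" where
  "H_hist h = hist_integral h (\<lambda>m. m i) / prob (hist_event h) * (hist_integral h best_indicator / prob (hist_event h))"

lemma H_hist_unit: "H_hist h \<in> {0..1}"
proof -
  have ratio: "hist_integral h f / prob (hist_event h) \<in> {0..1}"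
    if "f \<in> borel_measurable (PiM {..<K} (\<lambda>_. borel))" "\<And>\<omega>. \<omega> \<in> space M \<Longrightarrow> f (means \<omega>) \<in> {0..1}" for f
    using hist_integral_bounds[OF that, of h] measure_nonneg[of M "hist_event h"]
    by (auto simp: divide_le_eq_1)
  have "hist_integral h (\<lambda>m. m i) / prob (hist_event h) \<in> {0..1}"
    using means_unit i_lt by (intro ratio) auto
  moreover have "hist_integral h best_indicator / prob (hist_event h) \<in> {0..1}"
    using best_indicator_unit by (intro ratio) auto
  ultimately show ?thesis
    unfolding H_hist_def by blast
qed

lemma H_hist_mult_prob:
  assumes h: "valid_hist h"
  shows "H_hist h * prob (hist_event h) = seed_prob h * weighted_H h"
proof -
  have unit: "\<omega> \<in> space M \<Longrightarrow> means \<omega> i \<in> {0..1}" "\<omega> \<in> space M \<Longrightarrow> best_indicator (means \<omega>) \<in> {0..1}" for \<omega>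
    using means_unit i_lt best_indicator_unit by auto
  have "prob (hist_event h) = hist_integral h (\<lambda>_. 1)"
    by (simp add: hist_integral_def)
  then have "prob (hist_event h) = seed_prob h * lik_integral h (\<lambda>_. 1)"
    using hist_integral_eq[OF h] by simp
  moreover have "hist_integral h (\<lambda>m. m i) = seed_prob h * lik_integral h (\<lambda>m. m i)"
    "hist_integral h best_indicator = seed_prob h * lik_integral h best_indicator"
    using hist_integral_eq[OF h] unit by auto
  ultimately show ?thesis
    by (cases "seed_prob h = 0"; cases "lik_integral h (\<lambda>_. 1) = 0") (simp_all add: H_hist_def weighted_H_def)
qed

lemma H_hist_step:
  assumes h: "valid_hist h"
  shows "drift_sign * ((\<Sum>a<K. \<Sum>b\<in>UNIV. H_hist (h @ [(a, b)]) * prob (hist_event (h @ [(a, b)])))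
                       - H_hist h * prob (hist_event h)) \<le> 0"
proof -
  define q where "q a = seed_prob (h @ [(a, True)])" for a
  have q_snoc: "seed_prob (h @ [(a, b)]) = q a" for a b
    by (simp add: q_def seed_prob_snoc)
  have hab: "valid_hist (h @ [(a, b)])" if "a < K" for a b
    using h that by (simp add: valid_hist_def)
  have "(\<Sum>a<K. \<Sum>b\<in>UNIV. H_hist (h @ [(a, b)]) * prob (hist_event (h @ [(a, b)])))
      = (\<Sum>a<K. q a * (\<Sum>b\<in>UNIV. weighted_H (h @ [(a, b)])))"
    by (intro sum.cong refl) (simp add: H_hist_mult_prob hab q_snoc sum_distrib_left)
  moreover have "H_hist h * prob (hist_event h) = (\<Sum>a<K. q a * weighted_H h)"
    using sum_seed_prob_snoc[of h True] by (simp add: H_hist_mult_prob[OF h] q_def sum_distrib_right[symmetric])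
  ultimately have "drift_sign * ((\<Sum>a<K. \<Sum>b\<in>UNIV. H_hist (h @ [(a, b)]) * prob (hist_event (h @ [(a, b)])))
                       - H_hist h * prob (hist_event h))
      = (\<Sum>a<K. q a * (drift_sign * ((\<Sum>b\<in>UNIV. weighted_H (h @ [(a, b)])) - weighted_H h)))"
    by (simp add: sum_subtractf[symmetric] sum_distrib_left algebra_simps)
  also have "\<dots> \<le> 0"
  proof (rule sum_nonpos)
    fix a assume "a \<in> {..<K}"
    then show "q a * (drift_sign * ((\<Sum>b\<in>UNIV. weighted_H (h @ [(a, b)])) - weighted_H h)) \<le> 0"
      using weighted_H_step_arm[OF h, of a] by (rule_tac mult_nonneg_nonpos) (simp_all add: q_def seed_prob_def)
  qed
  finally show ?thesis .
qed

definition H_process :: "nat \<Rightarrow> 'a \<Rightarrow> real" where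
  "H_process n \<omega> = real_cond_exp M (hist_algebra n) (mu i) \<omega> *
     real_cond_exp M (hist_algebra n) (\<lambda>\<omega>. best_indicator (means \<omega>)) \<omega>"

lemma H_process_meas: "H_process n \<in> borel_measurable (hist_algebra n)"
  unfolding H_process_def[abs_def] by measurable

lemma H_process_meas_M [measurable]: "H_process n \<in> borel_measurable M"
  unfolding H_process_def[abs_def] by measurable

lemma H_hist_history_meas [measurable]: "(\<lambda>\<omega>. H_hist (history n \<omega>)) \<in> borel_measurable M"
  by (rule measurable_compose[OF history_meas]) simp

lemma integrable_H_hist_history: "integrable M (\<lambda>\<omega>. H_hist (history n \<omega>))"
  using H_hist_unit by (intro integrable_unit_interval) simp_all

lemma H_process_history: "AE \<omega> in M. H_process n \<omega> = H_hist (history n \<omega>)"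
proof -
  have "integrable M (mu i)" "integrable M (\<lambda>\<omega>. best_indicator (means \<omega>))"
    using mu_unit[OF i_lt] best_indicator_unit by (auto intro!: integrable_unit_interval)
  from real_cond_exp_history[OF this(1), of n] real_cond_exp_history[OF this(2), of n] show ?thesis
    by eventually_elim (simp add: H_process_def H_hist_def hist_integral_def means_arm)
qed

lemma cond_exp_H_process_Suc:
  "AE \<omega> in M. real_cond_exp M (hist_algebra n) (H_process (Suc n)) \<omega> =
     (\<Sum>a<K. \<Sum>b\<in>UNIV. H_hist (history n \<omega> @ [(a, b)]) * prob (hist_event (history n \<omega> @ [(a, b)])))
       / prob (hist_event (history n \<omega>))"
proof -
  interpret finite_measure_subalgebra M "hist_algebra n"
    by unfold_locales (rule hist_algebra_subalgebra)
  have "AE \<omega> in M. real_cond_exp M (hist_algebra n) (H_process (Suc n)) \<omega> =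
      real_cond_exp M (hist_algebra n) (\<lambda>\<omega>. H_hist (history (Suc n) \<omega>)) \<omega>"
    by (rule real_cond_exp_cong[OF H_process_history]) simp_all
  with real_cond_exp_history[OF integrable_H_hist_history, of n "Suc n"] show ?thesis
    by eventually_elim (simp add: integral_history_Suc)
qed

lemma H_process_drift:
  "AE \<omega> in M. drift_sign * (real_cond_exp M (hist_algebra n) (H_process (Suc n)) \<omega> - H_process n \<omega>) \<le> 0"
  using cond_exp_H_process_Suc[of n] H_process_history[of n]
proof eventually_elim
  case (elim \<omega>)
  define h where "h = history n \<omega>"
  define S where "S = (\<Sum>a<K. \<Sum>b\<in>UNIV. H_hist (h @ [(a, b)]) * prob (hist_event (h @ [(a, b)])))"
  define P where "P = prob (hist_event h)"
  have "drift_sign * (real_cond_exp M (hist_algebra n) (H_process (Suc n)) \<omega> - H_process n \<omega>) =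
      drift_sign * (S / P - H_hist h)"
    using elim by (simp add: h_def S_def P_def)
  also have "\<dots> = drift_sign * (S - H_hist h * P) / P"
    by (cases "P = 0") (simp_all add: H_hist_def P_def field_simps)
  also have "\<dots> \<le> 0"
    using H_hist_step[OF valid_history] by (intro divide_nonpos_nonneg) (simp_all add: h_def S_def P_def)
  finally show ?case .
qed

lemma H_process_super_submartingale:
  "(i \<noteq> j \<longrightarrow> supermartingale M (\<lambda>t. hist_algebra (t - 1)) T (\<lambda>t. H_process (t - 1))) \<and>
   (i = j \<longrightarrow> submartingale M (\<lambda>t. hist_algebra (t - 1)) T (\<lambda>t. H_process (t - 1)))"
proof -
  have filtration: "is_filtration M (\<lambda>t. hist_algebra (t - 1)) T"
    unfolding is_filtration_def
  proof (intro conjI ballI)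
    show "subalgebra M (hist_algebra (t - 1))" for t
      by (rule hist_algebra_subalgebra)
    fix t assume "t \<in> {1..<T}"
    then have "Suc (t - 1) = t" by auto
    then show "sets (hist_algebra (t - 1)) \<subseteq> sets (hist_algebra (Suc t - 1))"
      using hist_algebra_mono[of "t - 1"] by simp
  qed
  have adapted: "integrable M (H_process n)" "H_process n \<in> borel_measurable (hist_algebra n)" for n
  proof -
    show "integrable M (H_process n)"
      using H_process_history[of n]
      by (intro integrable_cong_AE_imp[OF integrable_H_hist_history H_process_meas_M]) (auto elim: AE_mp)
    show "H_process n \<in> borel_measurable (hist_algebra n)"
      by (rule H_process_meas)
  qed
  have drift: "AE \<omega> in M. drift_sign * (real_cond_exp M (hist_algebra (t - 1)) (H_process (Suc t - 1)) \<omega>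
      - H_process (t - 1) \<omega>) \<le> 0" if "t \<in> {1..<T}" for t
    using H_process_drift[of "t - 1"] that by (simp add: Suc_diff_le)
  show ?thesis
    unfolding supermartingale_def submartingale_def
    using filtration adapted drift by (auto simp: drift_sign_def elim!: AE_mp)
qed

end

theorem lemma3p6:
  fixes M :: "'a measure" and N :: "'r measure"
    and K T i j :: nat
    and mu :: "nat \<Rightarrow> 'a \<Rightarrow> real"
    and Z :: "nat \<Rightarrow> nat \<Rightarrow> 'a \<Rightarrow> bool"
    and R :: "'a \<Rightarrow> 'r"
    and alg :: "nat \<Rightarrow> (nat \<times> bool) list \<Rightarrow> 'r \<Rightarrow> nat"
  assumes "prob_space M"
    and "K \<ge> 1" and "i < K" and "j < K"
    \<comment> \<open>means: independent, [0,1]-valued (priors P_k = distributions of mu k, arbitrary)\<close>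
    and "\<And>k. k < K \<Longrightarrow> mu k \<in> borel_measurable M"
    and "\<And>k \<omega>. k < K \<Longrightarrow> \<omega> \<in> space M \<Longrightarrow> mu k \<omega> \<in> {0..1}"
    and "prob_space.indep_vars M (\<lambda>_. borel) mu {..<K}"
    \<comment> \<open>samples: given the means, independent with Z k n ~ Bernoulli(mu k)\<close>
    and "\<And>k n. k < K \<Longrightarrow> Z k n \<in> measurable M (count_space UNIV)"
    and "\<And>S (b :: nat \<times> nat \<Rightarrow> bool). finite S \<Longrightarrow> S \<subseteq> {..<K} \<times> UNIV \<Longrightarrow>
           AE \<omega> in M.
             real_cond_exp M
               (vimage_algebra (space M) (\<lambda>\<omega>. restrict (\<lambda>k. mu k \<omega>) {..<K}) (PiM {..<K} (\<lambda>_. borel)))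
               (indicator {\<omega>\<in>space M. \<forall>p\<in>S. Z (fst p) (snd p) \<omega> = b p}) \<omega>
             = (\<Prod>p\<in>S. if b p then mu (fst p) \<omega> else 1 - mu (fst p) \<omega>)"
    \<comment> \<open>algorithm: arm in round s is alg s (past history) (internal seed R), seed independent of environment\<close>
    and "R \<in> measurable M N"
    and "\<And>s h. alg s h \<in> measurable N (count_space UNIV)"
    and "\<And>s h r. alg s h r < K"
    and "prob_space.indep_set M (sets (vimage_algebra (space M) R N))
           (sets (vimage_algebra (space M)
              (\<lambda>\<omega>. (restrict (\<lambda>k. mu k \<omega>) {..<K}, restrict (\<lambda>p. Z (fst p) (snd p) \<omega>) ({..<K} \<times> UNIV)))
              (PiM {..<K} (\<lambda>_. borel) \<Otimes>\<^sub>M PiM ({..<K} \<times> UNIV) (\<lambda>_. count_space UNIV))))"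
  defines "F \<equiv> bandit_filtration M alg Z R"
    and "H \<equiv> (\<lambda>t \<omega>. real_cond_exp M (bandit_filtration M alg Z R t) (mu i) \<omega> *
                    real_cond_exp M (bandit_filtration M alg Z R t) (\<lambda>\<omega>. indicator {\<omega>. best_arm (\<lambda>k. mu k \<omega>) K = j} \<omega>) \<omega>)"
  shows "(i \<noteq> j \<longrightarrow> supermartingale M F T H) \<and> (i = j \<longrightarrow> submartingale M F T H)"
proof -
  interpret bandit_arms M N K mu Z R alg i j
    using assms unfolding bandit_arms_def bandit_def bandit_axioms_def bandit_arms_axioms_def by simp
  have F: "F = (\<lambda>t. hist_algebra (t - 1))"
    by (simp add: fun_eq_iff F_def bandit_filtration_def hist_algebra_def history_def[abs_def])
  have "indicator {\<omega>. best_arm (\<lambda>k. mu k \<omega>) K = j} \<omega> = best_indicator (means \<omega>)" for \<omega>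
    using best_arm_cong[of K "\<lambda>k. mu k \<omega>" "means \<omega>"] by (simp add: best_indicator_def means_def)
  then have H: "H = (\<lambda>t. H_process (t - 1))"
    by (simp add: fun_eq_iff H_def H_process_def F[unfolded F_def])
  show ?thesis
    unfolding F H by (rule H_process_super_submartingale)
qed

end
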